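(* For all $d,k\in\mathbb{N}$ and all $\mathbf{x}_1,\mathbf{x}_2\in\mathcal{G}_{d,k}$, $$\mathsf{bary}(\mathbf{x}_1,\mathbf{x}_2)=\mathbf{x}_1\cdot\exp\Big(\tfrac12\log(\mathbf{x}_1^{-1}\cdot\mathbf{x}_2)\Big).$$
   Context: $T_{d,k}=\bigoplus_{\ell=0}^k(\mathbb{R}^d)^{\otimes\ell}$ is the truncated tensor algebra with product the bilinear extension of the tensor product of levels, set to $0$ when the total level exceeds $k$. $\mathfrak{g}_{d,k}$ is the smallest Lie subalgebra (commutator bracket) of $T_{d,k}$ containing $e_1,\dots,e_d\in\mathbb{R}^d$; $\exp(\mathbf{z})=\sum_{\ell=0}^k\mathbf{z}^{\otimes\ell}/\ell!$; $\mathcal{G}_{d,k}=\exp(\mathfrak{g}_{d,k})$, a group under the product of $T_{d,k}$, and $\log:\mathcal{G}_{d,k}\to\mathfrak{g}_{d,k}$, $\log(\mathbf{s})=\sum_{\ell\ge1}\frac{(-1)^{\ell+1}}{\ell}(\mathbf{s}-1)^{\otimes\ell}$, is the inverse of $\exp$. For $\mathbf{x}\in\mathcal{G}_{d,k}^N$, $\mathsf{bary}(\mathbf{x})$ is the unique $\mathbf{m}\in\mathcal{G}_{d,k}$ with $\sum_{i=1}^N\log(\mathbf{m}^{-1}\mathbf{x}_i)=0$. *)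

theory Defs
  imports Complex_Main "HOL-Library.Function_Algebras"
begin

text \<open>Elements of the truncated tensor algebra T_{d,k} are represented by their
coordinates with respect to the basis of words: a tensor is a function from
words (lists of letters 0..d-1) to real coefficients.\<close>

type_synonym tensor = "nat list \<Rightarrow> real"

definition Tset :: "nat \<Rightarrow> nat \<Rightarrow> tensor set" where
  "Tset d k = {x. \<forall>w. x w \<noteq> 0 \<longrightarrow> length w \<le> k \<and> set w \<subseteq> {..<d}}"

definition tone :: tensor where
  "tone = (\<lambda>w. if w = [] then 1 else 0)"

definition tsmul :: "real \<Rightarrow> tensor \<Rightarrow> tensor" where
  "tsmul c x = (\<lambda>w. c * x w)"

definition tmul :: "nat \<Rightarrow> tensor \<Rightarrow> tensor \<Rightarrow> tensor" where
  "tmul k a b = (\<lambda>w. if length w \<le> k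
      then (\<Sum>i\<le>length w. a (take i w) * b (drop i w)) else 0)"

primrec tpow :: "nat \<Rightarrow> tensor \<Rightarrow> nat \<Rightarrow> tensor" where
  "tpow k x 0 = tone"
| "tpow k x (Suc n) = tmul k (tpow k x n) x"

definition texp :: "nat \<Rightarrow> tensor \<Rightarrow> tensor" where
  "texp k z = (\<Sum>l\<le>k. tsmul (1 / fact l) (tpow k z l))"

text \<open>log of an element with level-0 part 1: the series terminates after level k,
since (s - 1) has no level-0 component and powers beyond k vanish.\<close>
definition tlog :: "nat \<Rightarrow> tensor \<Rightarrow> tensor" where
  "tlog k s = (\<Sum>l\<in>{1..k}. tsmul ((-1) ^ (l + 1) / real l) (tpow k (s - tone) l))"

definition tbracket :: "nat \<Rightarrow> tensor \<Rightarrow> tensor \<Rightarrow> tensor" where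
  "tbracket k a b = tmul k a b - tmul k b a"

text \<open>Basis vector e_i of level 1 (index i < d); it lives in T_{d,k} only when k \<ge> 1,
so it is truncated to 0 when k = 0.\<close>
definition tgen :: "nat \<Rightarrow> nat \<Rightarrow> tensor" where
  "tgen k i = (\<lambda>w. if w = [i] \<and> 1 \<le> k then 1 else 0)"

inductive_set liealg :: "nat \<Rightarrow> nat \<Rightarrow> tensor set" for d k where
  gen: "i < d \<Longrightarrow> tgen k i \<in> liealg d k"
| zero: "0 \<in> liealg d k"
| add: "a \<in> liealg d k \<Longrightarrow> b \<in> liealg d k \<Longrightarrow> a + b \<in> liealg d k"
| smul: "a \<in> liealg d k \<Longrightarrow> tsmul c a \<in> liealg d k"
| bracket: "a \<in> liealg d k \<Longrightarrow> b \<in> liealg d k \<Longrightarrow> tbracket k a b \<in> liealg d k"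

definition Gset :: "nat \<Rightarrow> nat \<Rightarrow> tensor set" where
  "Gset d k = texp k ` liealg d k"

definition tinv :: "nat \<Rightarrow> nat \<Rightarrow> tensor \<Rightarrow> tensor" where
  "tinv d k x = (THE y. y \<in> Tset d k \<and> tmul k x y = tone \<and> tmul k y x = tone)"

definition bary :: "nat \<Rightarrow> nat \<Rightarrow> tensor list \<Rightarrow> tensor" where
  "bary d k xs = (THE m. m \<in> Gset d k \<and>
      sum_list (map (\<lambda>x. tlog k (tmul k (tinv d k m) x)) xs) = 0)"

end

theory Submission
  imports Defs "HOL-Computational_Algebra.Formal_Power_Series" "HOL-Library.Multiset"
begin

text \<open>Embed the truncated tensor algebra into the algebra of formal tensor series: the
  truncated operations become exact ones read modulo words longer than \<open>k\<close>, and \<open>exp\<close> and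
  \<open>log\<close> are mutually inverse power-series substitutions. Exponentials of primitive series
  (\<open>\<Delta>x = x \<otimes> 1 + 1 \<otimes> x\<close>) are exactly the group-like series (\<open>\<Delta>x = x \<otimes> x\<close>), which are
  closed under products, and by the Dynkin--Specht--Wever lemma the truncated primitive series
  are the Lie elements. Hence the group consists of the truncated group-like series, and
  \<open>m = x1 exp(log(x1\<inverse> x2) / 2)\<close> belongs to it.

  Conversely, write a candidate as \<open>x1 y\<close>. The barycentre equation
  \<open>log(y\<inverse>) + log(y\<inverse> x1\<inverse> x2) = 0\<close> says \<open>y\<inverse> x1\<inverse> x2 = y\<close>, i.e. \<open>y\<^sup>2 = x1\<inverse> x2\<close>; since
  \<open>log(y\<^sup>2) = 2 log y\<close>, the only unipotent square root is \<open>exp(log(x1\<inverse> x2) / 2)\<close>, so the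
  barycentre is \<open>m\<close>.\<close>

unbundle fps_syntax

section \<open>Formal tensor series\<close>

text \<open>A copy of \<open>tensor\<close> whose product is untruncated concatenation rather than the pointwise
  product of \<open>Function_Algebras\<close>.\<close>

datatype tseries = TS (coef: "nat list \<Rightarrow> real")

lemma tseries_eqI: "(\<And>w. coef x w = coef y w) \<Longrightarrow> x = y"
  by (cases x; cases y) auto

instantiation tseries :: real_algebra_1
begin

definition "0 = TS (\<lambda>w. 0)"
definition "1 = TS (\<lambda>w. if w = [] then 1 else 0)"
definition "x + y = TS (\<lambda>w. coef x w + coef y w)"
definition "x - y = TS (\<lambda>w. coef x w - coef y w)"
definition "- x = TS (\<lambda>w. - coef x w)"
definition "scaleR c x = TS (\<lambda>w. c * coef x w)"
definition "x * y = TS (\<lambda>w. \<Sum>i\<le>length w. coef x (take i w) * coef y (drop i w))"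

lemma coef_simps [simp]:
  "coef 0 w = 0" "coef 1 w = (if w = [] then 1 else 0)"
  "coef (x + y) w = coef x w + coef y w" "coef (x - y) w = coef x w - coef y w"
  "coef (- x) w = - coef x w" "coef (scaleR c x) w = c * coef x w"
  by (simp_all add: zero_tseries_def one_tseries_def plus_tseries_def minus_tseries_def
      uminus_tseries_def scaleR_tseries_def)

lemma coef_mult: "coef (x * y) w = (\<Sum>i\<le>length w. coef x (take i w) * coef y (drop i w))"
  by (simp add: times_tseries_def)

lemma coef_mult_assoc: "coef (a * b * c) w = coef (a * (b * c)) w"
proof -
  let ?n = "length w"
  define g where
    "g j l = coef a (take j w) * coef b (take l (drop j w)) * coef c (drop l (drop j w))" for j l
  have "coef (a * b * c) w = (\<Sum>i\<le>?n. \<Sum>j\<le>i. g j (i - j))"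
    unfolding coef_mult g_def
    by (auto simp: sum_distrib_right min_def drop_take intro!: sum.cong)
  also have "\<dots> = (\<Sum>(j,l)\<in>{(j,l). j + l \<le> ?n}. g j l)"
    by (rule sum.triangle_reindex_eq[symmetric])
  also have "{(j,l). j + l \<le> ?n} = Sigma {..?n} (\<lambda>j. {..?n - j})" by auto
  also have "(\<Sum>(j,l)\<in>Sigma {..?n} (\<lambda>j. {..?n - j}). g j l) = (\<Sum>j\<le>?n. \<Sum>l\<le>?n - j. g j l)"
    by (rule sum.Sigma[symmetric]) auto
  also have "\<dots> = coef (a * (b * c)) w"
    unfolding coef_mult g_def by (auto simp: sum_distrib_left mult.assoc intro!: sum.cong)
  finally show ?thesis .
qed

lemma coef_one_mult: "coef (1 * a) w = coef a w"
proof -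
  have "coef (1 * a) w = (\<Sum>i\<in>{0}. coef 1 (take i w) * coef a (drop i w))"
    unfolding coef_mult by (rule sum.mono_neutral_right) (auto simp: one_tseries_def)
  then show ?thesis by (simp add: one_tseries_def)
qed

lemma coef_mult_one: "coef (a * 1) w = coef a w"
proof -
  have "coef (a * 1) w = (\<Sum>i\<in>{length w}. coef a (take i w) * coef 1 (drop i w))"
    unfolding coef_mult by (rule sum.mono_neutral_right) (auto simp: one_tseries_def)
  then show ?thesis by (simp add: one_tseries_def)
qed

instance
proof
  fix a b c :: tseries and r s :: real
  show "a * b * c = a * (b * c)" by (rule tseries_eqI, rule coef_mult_assoc)
  show "(a + b) * c = a * c + b * c"
    by (rule tseries_eqI) (simp add: coef_mult distrib_right sum.distrib)
  show "a * (b + c) = a * b + a * c"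
    by (rule tseries_eqI) (simp add: coef_mult distrib_left sum.distrib)
  show "1 * a = a" by (rule tseries_eqI, rule coef_one_mult)
  show "a * 1 = a" by (rule tseries_eqI, rule coef_mult_one)
  show "a + b + c = a + (b + c)" by (rule tseries_eqI) simp
  show "a + b = b + a" by (rule tseries_eqI) simp
  show "0 + a = a" by (rule tseries_eqI) simp
  show "- a + a = 0" by (rule tseries_eqI) simp
  show "a - b = a + - b" by (rule tseries_eqI) simp
  show "(0::tseries) \<noteq> 1" by (metis coef_simps(1,2) zero_neq_one)
  show "r *\<^sub>R (a + b) = r *\<^sub>R a + r *\<^sub>R b" by (rule tseries_eqI) (simp add: algebra_simps)
  show "(r + s) *\<^sub>R a = r *\<^sub>R a + s *\<^sub>R a" by (rule tseries_eqI) (simp add: algebra_simps)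
  show "r *\<^sub>R s *\<^sub>R a = (r * s) *\<^sub>R a" by (rule tseries_eqI) simp
  show "1 *\<^sub>R a = a" by (rule tseries_eqI) simp
  show "r *\<^sub>R a * b = r *\<^sub>R (a * b)"
    by (rule tseries_eqI) (simp add: coef_mult sum_distrib_left algebra_simps)
  show "a * r *\<^sub>R b = r *\<^sub>R (a * b)"
    by (rule tseries_eqI) (simp add: coef_mult sum_distrib_left algebra_simps)
qed

end

lemma coef_sum: "coef (\<Sum>i\<in>A. f i) w = (\<Sum>i\<in>A. coef (f i) w)"
  by (induction A rule: infinite_finite_induct) auto

lemma coef_fun:
  "coef (x + y) = (\<lambda>w. coef x w + coef y w)" "coef (x - y) = (\<lambda>w. coef x w - coef y w)"
  "coef (- x) = (\<lambda>w. - coef x w)" "coef (c *\<^sub>R x) = (\<lambda>w. c * coef x w)" "coef 0 = (\<lambda>w. 0)"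
  by (simp_all add: fun_eq_iff)

definition eq_upto :: "nat \<Rightarrow> tseries \<Rightarrow> tseries \<Rightarrow> bool" where
  "eq_upto k x y \<longleftrightarrow> (\<forall>w. length w \<le> k \<longrightarrow> coef x w = coef y w)"

definition vanishes_below :: "nat \<Rightarrow> tseries \<Rightarrow> bool" where
  "vanishes_below n x \<longleftrightarrow> (\<forall>w. length w < n \<longrightarrow> coef x w = 0)"

lemma eq_upto_refl [simp]: "eq_upto k x x"
  by (simp add: eq_upto_def)

lemma eq_upto_sym: "eq_upto k x y \<Longrightarrow> eq_upto k y x"
  by (simp add: eq_upto_def)

lemma eq_upto_sym_iff: "eq_upto k x y \<longleftrightarrow> eq_upto k y x"
  by (auto simp: eq_upto_def)

lemma eq_upto_trans: "eq_upto k x y \<Longrightarrow> eq_upto k y z \<Longrightarrow> eq_upto k x z"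
  by (simp add: eq_upto_def)

lemma eq_upto_add: "eq_upto k x y \<Longrightarrow> eq_upto k x' y' \<Longrightarrow> eq_upto k (x + x') (y + y')"
  by (simp add: eq_upto_def)

lemma eq_upto_diff: "eq_upto k x y \<Longrightarrow> eq_upto k x' y' \<Longrightarrow> eq_upto k (x - x') (y - y')"
  by (simp add: eq_upto_def)

lemma eq_upto_mult: "eq_upto k x y \<Longrightarrow> eq_upto k x' y' \<Longrightarrow> eq_upto k (x * x') (y * y')"
  unfolding eq_upto_def coef_mult by (auto intro!: sum.cong)

lemma eq_upto_power: "eq_upto k x y \<Longrightarrow> eq_upto k (x ^ n) (y ^ n)"
  by (induction n) (auto intro: eq_upto_mult)

lemma eq_upto_add_eq_0_iff: "eq_upto k (x + y) 0 \<longleftrightarrow> eq_upto k y (- x)"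
  by (auto simp: eq_upto_def add_eq_0_iff2)

lemma eq_upto_scaleR_iff: "c \<noteq> 0 \<Longrightarrow> eq_upto k (c *\<^sub>R x) (c *\<^sub>R y) \<longleftrightarrow> eq_upto k x y"
  by (simp add: eq_upto_def)

lemma eq_upto_mult_left_iff:
  assumes "c' * c = 1"
  shows "eq_upto k (c * x) (c * y) \<longleftrightarrow> eq_upto k x y"
proof
  assume "eq_upto k (c * x) (c * y)"
  then have "eq_upto k (c' * (c * x)) (c' * (c * y))" by (rule eq_upto_mult[OF eq_upto_refl])
  then show "eq_upto k x y" by (simp add: mult.assoc[symmetric] assms)
qed (rule eq_upto_mult[OF eq_upto_refl])

lemma vanishes_below_mult:
  "vanishes_below i a \<Longrightarrow> vanishes_below j b \<Longrightarrow> vanishes_below (i + j) (a * b)"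
  unfolding vanishes_below_def coef_mult
proof (intro allI impI sum.neutral ballI)
  fix w :: "nat list" and l
  assume a: "\<forall>w. length w < i \<longrightarrow> coef a w = 0" and b: "\<forall>w. length w < j \<longrightarrow> coef b w = 0"
    and w: "length w < i + j" and l: "l \<in> {..length w}"
  show "coef a (take l w) * coef b (drop l w) = 0"
  proof (cases "length (take l w) < i")
    case True then show ?thesis using a by simp
  next
    case False then show ?thesis using b w l by simp
  qed
qed

lemma vanishes_below_mono: "vanishes_below n x \<Longrightarrow> m \<le> n \<Longrightarrow> vanishes_below m x"
  by (simp add: vanishes_below_def)

lemma vanishes_below_add:
  "vanishes_below n x \<Longrightarrow> vanishes_below n y \<Longrightarrow> vanishes_below n (x + y)"
  by (simp add: vanishes_below_def)

lemma vanishes_below_uminus: "vanishes_below n x \<Longrightarrow> vanishes_below n (- x)"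
  by (simp add: vanishes_below_def)

lemma vanishes_below_scaleR: "vanishes_below n x \<Longrightarrow> vanishes_below n (c *\<^sub>R x)"
  by (simp add: vanishes_below_def)

lemma vanishes_below_Suc_eq_upto_0: "vanishes_below (Suc n) x \<Longrightarrow> eq_upto n x 0"
  by (simp add: vanishes_below_def eq_upto_def)

lemma vanishes_below_power: "vanishes_below 1 z \<Longrightarrow> vanishes_below n (z ^ n)"
proof (induction n)
  case 0 then show ?case by (simp add: vanishes_below_def)
next
  case (Suc n)
  then have "vanishes_below (n + 1) (z ^ n * z)" by (intro vanishes_below_mult) auto
  then show ?case by (simp only: power_Suc2) simp
qed

lemma coef_power_eq_0: "vanishes_below 1 z \<Longrightarrow> length w < n \<Longrightarrow> coef (z ^ n) w = 0"
  using vanishes_below_power[of z n] by (simp add: vanishes_below_def)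

section \<open>Substitution into power series; exponential and logarithm\<close>

text \<open>The sum stops at the length of the word; this gives the true coefficient only when
  \<open>y\<close> has no constant term, which the lemmas below assume.\<close>

definition fps_eval :: "real fps \<Rightarrow> tseries \<Rightarrow> tseries" where
  "fps_eval p y = TS (\<lambda>w. \<Sum>n\<le>length w. p $ n * coef (y ^ n) w)"

lemma coef_fps_eval: "coef (fps_eval p y) w = (\<Sum>n\<le>length w. p $ n * coef (y ^ n) w)"
  by (simp add: fps_eval_def)

lemma coef_fps_eval_upto:
  assumes "vanishes_below 1 y" "length w \<le> N"
  shows "coef (fps_eval p y) w = (\<Sum>n\<le>N. p $ n * coef (y ^ n) w)"
  unfolding coef_fps_eval
  by (rule sum.mono_neutral_left) (use assms coef_power_eq_0 in auto)

lemma eq_upto_fps_eval: "eq_upto k y y' \<Longrightarrow> eq_upto k (fps_eval p y) (fps_eval p y')"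
  unfolding eq_upto_def coef_fps_eval using eq_upto_power[of k y y']
  by (auto simp: eq_upto_def intro!: sum.cong)

lemma fps_eval_diff: "fps_eval (p - q) y = fps_eval p y - fps_eval q y"
  by (rule tseries_eqI) (simp add: coef_fps_eval sum_subtractf algebra_simps)

lemma fps_eval_1: "fps_eval 1 y = 1"
proof (rule tseries_eqI)
  fix w
  have "coef (fps_eval 1 y) w = (\<Sum>n\<in>{0}. (1::real fps) $ n * coef (y ^ n) w)"
    unfolding coef_fps_eval by (rule sum.mono_neutral_right) auto
  then show "coef (fps_eval 1 y) w = coef 1 w" by simp
qed

lemma fps_eval_X:
  assumes "vanishes_below 1 y"
  shows "fps_eval fps_X y = y"
proof (rule tseries_eqI)
  fix w
  have "coef (fps_eval fps_X y) w = (\<Sum>n\<le>Suc (length w). (fps_X::real fps) $ n * coef (y ^ n) w)"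
    by (rule coef_fps_eval_upto[OF assms]) simp
  also have "\<dots> = (\<Sum>n\<in>{1}. (fps_X::real fps) $ n * coef (y ^ n) w)"
    by (rule sum.mono_neutral_right) (auto simp: fps_X_def)
  finally show "coef (fps_eval fps_X y) w = coef y w" by (simp add: fps_X_def)
qed

lemma fps_eval_mult:
  assumes y: "vanishes_below 1 y"
  shows "fps_eval (p * q) y = fps_eval p y * fps_eval q y"
proof (rule tseries_eqI)
  fix w :: "nat list"
  let ?N = "length w"
  define g where "g a b = p $ a * q $ b * coef (y ^ (a + b)) w" for a b
  have "coef (fps_eval p y * fps_eval q y) w =
      (\<Sum>i\<le>?N. (\<Sum>a\<le>?N. p$a * coef (y^a) (take i w)) * (\<Sum>b\<le>?N. q$b * coef (y^b) (drop i w)))"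
    unfolding coef_mult
    by (intro sum.cong refl arg_cong2[where f = "(*)"] coef_fps_eval_upto[OF y]) simp_all
  also have "\<dots> = (\<Sum>i\<le>?N. \<Sum>a\<le>?N. \<Sum>b\<le>?N.
      (p$a * coef (y^a) (take i w)) * (q$b * coef (y^b) (drop i w)))"
    by (simp only: sum_product)
  also have "\<dots> = (\<Sum>a\<le>?N. \<Sum>b\<le>?N. \<Sum>i\<le>?N.
      (p$a * coef (y^a) (take i w)) * (q$b * coef (y^b) (drop i w)))"
    by (subst sum.swap) (intro sum.cong refl sum.swap)
  also have "\<dots> = (\<Sum>a\<le>?N. \<Sum>b\<le>?N. p$a * q$b * coef (y^a * y^b) w)"
    by (simp only: coef_mult sum_distrib_left mult_ac)
  also have "\<dots> = (\<Sum>(a,b)\<in>Sigma {..?N} (\<lambda>_. {..?N}). g a b)"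
    by (simp add: sum.Sigma g_def power_add)
  also have "\<dots> = (\<Sum>(a,b)\<in>{(a,b). a + b \<le> ?N}. g a b)"
    by (rule sum.mono_neutral_right) (auto simp: g_def, metis not_le coef_power_eq_0[OF y])
  also have "\<dots> = (\<Sum>n\<le>?N. \<Sum>a\<le>n. g a (n - a))"
    by (rule sum.triangle_reindex_eq)
  also have "\<dots> = coef (fps_eval (p * q) y) w"
    unfolding coef_fps_eval g_def fps_mult_nth
    by (auto simp: sum_distrib_right atLeast0AtMost intro!: sum.cong)
  finally show "coef (fps_eval (p * q) y) w = coef (fps_eval p y * fps_eval q y) w" by simp
qed

lemma fps_eval_power: "vanishes_below 1 y \<Longrightarrow> fps_eval (q ^ i) y = fps_eval q y ^ i"
  by (induction i) (simp_all add: fps_eval_1 fps_eval_mult)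

lemma fps_eval_compose:
  assumes y: "vanishes_below 1 y" and q0: "q $ 0 = 0"
  shows "fps_eval (p oo q) y = fps_eval p (fps_eval q y)"
proof (rule tseries_eqI)
  fix w :: "nat list"
  let ?N = "length w"
  have "coef (fps_eval p (fps_eval q y)) w = (\<Sum>i\<le>?N. p$i * coef (fps_eval (q^i) y) w)"
    unfolding coef_fps_eval fps_eval_power[OF y] ..
  also have "\<dots> = (\<Sum>i\<le>?N. \<Sum>n\<le>?N. p$i * ((q^i)$n * coef (y^n) w))"
    by (simp add: coef_fps_eval sum_distrib_left)
  also have "\<dots> = (\<Sum>n\<le>?N. \<Sum>i\<le>?N. p$i * ((q^i)$n * coef (y^n) w))"
    by (rule sum.swap)
  also have "\<dots> = (\<Sum>n\<le>?N. \<Sum>i\<le>n. p$i * ((q^i)$n * coef (y^n) w))"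
    by (intro sum.cong refl sum.mono_neutral_right)
      (auto simp: startsby_zero_power_prefix[OF q0])
  also have "\<dots> = coef (fps_eval (p oo q) y) w"
    by (simp add: coef_fps_eval fps_compose_nth sum_distrib_left sum_distrib_right
        atLeast0AtMost mult_ac)
  finally show "coef (fps_eval (p oo q) y) w = coef (fps_eval p (fps_eval q y)) w" ..
qed

definition Exp :: "tseries \<Rightarrow> tseries" where
  "Exp z = fps_eval (fps_exp 1) z"

definition Log :: "tseries \<Rightarrow> tseries" where
  "Log x = fps_eval (fps_ln 1) (x - 1)"

lemma coef_Exp: "coef (Exp z) w = (\<Sum>n\<le>length w. coef (z ^ n) w / fact n)"
  by (simp add: Exp_def coef_fps_eval fps_exp_def)

lemma coef_Exp_upto:
  "vanishes_below 1 z \<Longrightarrow> length w \<le> N \<Longrightarrow> coef (Exp z) w = (\<Sum>n\<le>N. coef (z ^ n) w / fact n)"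
  unfolding Exp_def by (subst coef_fps_eval_upto[where N = N]) (simp_all add: fps_exp_def)

lemma coef_Exp_Nil [simp]: "coef (Exp z) [] = 1"
  by (simp add: coef_Exp)

lemma coef_Log_Nil [simp]: "coef (Log x) [] = 0"
  by (simp add: Log_def coef_fps_eval)

lemma Log_vanishes_below_1: "vanishes_below 1 (Log x)"
  by (simp add: vanishes_below_def)

lemma Exp_minus_1: "Exp z - 1 = fps_eval (fps_exp 1 - 1) z"
  by (simp add: Exp_def fps_eval_diff fps_eval_1)

lemma Log_Exp:
  assumes "vanishes_below 1 z"
  shows "Log (Exp z) = z"
proof -
  have "Log (Exp z) = fps_eval (fps_ln 1) (fps_eval (fps_exp 1 - 1) z)"
    by (simp add: Log_def Exp_minus_1)
  also have "\<dots> = fps_eval (fps_ln 1 oo (fps_exp 1 - 1)) z"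
    by (rule fps_eval_compose[symmetric]) (use assms in simp_all)
  also have "fps_ln 1 oo (fps_exp 1 - 1) = (fps_X :: real fps)"
    using fps_ln_fps_exp_inv[of "1::real"] fps_inv_fps_exp_compose(1)[of "1::real"] by simp
  finally show ?thesis using fps_eval_X[OF assms] by simp
qed

lemma Exp_Log:
  assumes "coef x [] = 1"
  shows "Exp (Log x) = x"
proof -
  have x: "vanishes_below 1 (x - 1)" using assms by (simp add: vanishes_below_def)
  have "Exp (Log x) - 1 = fps_eval (fps_exp 1 - 1) (fps_eval (fps_ln 1) (x - 1))"
    by (simp add: Log_def Exp_minus_1)
  also have "\<dots> = fps_eval ((fps_exp 1 - 1) oo fps_ln 1) (x - 1)"
    by (rule fps_eval_compose[symmetric]) (use x in simp_all)
  also have "(fps_exp 1 - 1) oo fps_ln 1 = (fps_X :: real fps)"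
    using fps_ln_fps_exp_inv[of "1::real"] fps_inv_fps_exp_compose(2)[of "1::real"] by simp
  finally have "Exp (Log x) - 1 = x - 1" using fps_eval_X[OF x] by simp
  then show ?thesis by simp
qed

lemma Exp_scaleR: "Exp (s *\<^sub>R z) = fps_eval (fps_exp s) z"
proof -
  have "(s *\<^sub>R z) ^ n = s ^ n *\<^sub>R z ^ n" for n
    by (induction n) (simp_all add: mult.commute)
  then show ?thesis by (intro tseries_eqI) (simp add: Exp_def coef_fps_eval fps_exp_def)
qed

lemma Exp_add_scaleR:
  assumes "vanishes_below 1 z"
  shows "Exp (s *\<^sub>R z) * Exp (t *\<^sub>R z) = Exp ((s + t) *\<^sub>R z)"
  by (simp add: Exp_scaleR fps_eval_mult[OF assms, symmetric] fps_exp_add_mult)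

lemma Exp_zero: "Exp 0 = 1"
  using Exp_scaleR[of 0 0] by (simp add: fps_eval_1)

lemma Exp_uminus_mult:
  assumes "vanishes_below 1 z"
  shows "Exp (- z) * Exp z = 1" "Exp z * Exp (- z) = 1"
  using Exp_add_scaleR[OF assms, of "-1" 1] Exp_add_scaleR[OF assms, of 1 "-1"]
  by (simp_all add: Exp_zero)

lemma Log_mult_self:
  assumes "coef x [] = 1"
  shows "Log (x * x) = 2 *\<^sub>R Log x"
  using Exp_add_scaleR[OF Log_vanishes_below_1, of 1 x 1]
  by (simp add: Exp_Log[OF assms] Log_Exp[OF vanishes_below_scaleR[OF Log_vanishes_below_1]])

lemma eq_upto_Exp: "eq_upto k y y' \<Longrightarrow> eq_upto k (Exp y) (Exp y')"
  unfolding Exp_def by (rule eq_upto_fps_eval)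

lemma eq_upto_Log: "eq_upto k y y' \<Longrightarrow> eq_upto k (Log y) (Log y')"
  unfolding Log_def by (intro eq_upto_fps_eval eq_upto_diff) auto

lemma eq_upto_Exp_iff:
  "vanishes_below 1 y \<Longrightarrow> vanishes_below 1 y' \<Longrightarrow> eq_upto k (Exp y) (Exp y') \<longleftrightarrow> eq_upto k y y'"
  using eq_upto_Log[of k "Exp y" "Exp y'"] by (auto simp: Log_Exp eq_upto_Exp)

lemma eq_upto_Log_iff:
  "coef x [] = 1 \<Longrightarrow> coef x' [] = 1 \<Longrightarrow> eq_upto k (Log x) (Log x') \<longleftrightarrow> eq_upto k x x'"
  using eq_upto_Exp[of k "Log x" "Log x'"] by (auto simp: Exp_Log eq_upto_Log)

section \<open>Unipotent inverses and the two-point barycentre equation\<close>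

lemma coef_mult_Nil [simp]: "coef (x * y) [] = coef x [] * coef y []"
  by (simp add: coef_mult)

definition Inv :: "tseries \<Rightarrow> tseries" where
  "Inv x = Exp (- Log x)"

lemma coef_Inv_Nil [simp]: "coef (Inv x) [] = 1"
  by (simp add: Inv_def)

lemma Inv_mult:
  assumes "coef x [] = 1"
  shows "Inv x * x = 1" "x * Inv x = 1"
  using Exp_uminus_mult[OF Log_vanishes_below_1, of x] by (simp_all add: Inv_def Exp_Log[OF assms])

lemma left_inverse_eq_Inv:
  assumes "a * x = 1" "coef x [] = 1"
  shows "a = Inv x"
proof -
  have "a = a * (x * Inv x)" using Inv_mult(2)[OF assms(2)] by simp
  also have "\<dots> = Inv x" by (simp add: mult.assoc[symmetric] assms(1))
  finally show ?thesis .
qed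

lemma Log_Inv: "coef x [] = 1 \<Longrightarrow> Log (Inv x) = - Log x"
  unfolding Inv_def by (rule Log_Exp[OF vanishes_below_uminus[OF Log_vanishes_below_1]])

lemma two_point_barycentre_iff:
  assumes m: "coef m [] = 1" and x1: "coef x1 [] = 1" and x2: "coef x2 [] = 1"
  shows "eq_upto k (Log (Inv m * x1) + Log (Inv m * x2)) 0 \<longleftrightarrow>
    eq_upto k (x1 * Exp ((1/2) *\<^sub>R Log (Inv x1 * x2))) m"
proof -
  define y where "y = Inv x1 * m"
  define g where "g = Inv x1 * x2"
  have y: "coef y [] = 1" and g: "coef g [] = 1" using m x2 by (simp_all add: y_def g_def)
  have m_eq: "m = x1 * y" and x2_eq: "x2 = x1 * g"
    by (simp_all add: y_def g_def mult.assoc[symmetric] Inv_mult[OF x1])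
  have "Inv m * x1 * y = 1" using Inv_mult(1)[OF m] by (simp add: m_eq mult.assoc)
  then have Inv_m_x1: "Inv m * x1 = Inv y" using y by (rule left_inverse_eq_Inv)
  have "eq_upto k (Log (Inv m * x1) + Log (Inv m * x2)) 0 \<longleftrightarrow>
      eq_upto k (Log (Inv y * g)) (Log y)"
    by (simp only: x2_eq mult.assoc[symmetric] Inv_m_x1 Log_Inv[OF y] eq_upto_add_eq_0_iff
        minus_minus)
  also have "\<dots> \<longleftrightarrow> eq_upto k (Inv y * g) y"
    using g y by (simp add: eq_upto_Log_iff)
  also have "\<dots> \<longleftrightarrow> eq_upto k g (y * y)"
    using eq_upto_mult_left_iff[OF Inv_mult(1)[OF y], of k "Inv y * g" y]
    by (simp add: mult.assoc[symmetric] Inv_mult(2)[OF y])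
  also have "\<dots> \<longleftrightarrow> eq_upto k (Log g) (2 *\<^sub>R Log y)"
    using g y by (simp add: eq_upto_Log_iff[symmetric] Log_mult_self)
  also have "\<dots> \<longleftrightarrow> eq_upto k ((1/2) *\<^sub>R Log g) (Log y)"
    using eq_upto_scaleR_iff[of "1/2" k "Log g" "2 *\<^sub>R Log y"] by simp
  also have "\<dots> \<longleftrightarrow> eq_upto k (Exp ((1/2) *\<^sub>R Log g)) y"
    using eq_upto_Exp_iff[OF vanishes_below_scaleR[OF Log_vanishes_below_1] Log_vanishes_below_1,
        of k "1/2" g y]
    by (simp add: Exp_Log[OF y])
  also have "\<dots> \<longleftrightarrow> eq_upto k (x1 * Exp ((1/2) *\<^sub>R Log g)) m"
    using eq_upto_mult_left_iff[OF Inv_mult(1)[OF x1]] by (simp add: m_eq)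
  finally show ?thesis by (simp add: g_def)
qed

section \<open>Shuffles; primitive and group-like series\<close>

fun shuffles :: "nat list \<Rightarrow> nat list \<Rightarrow> nat list list" where
  "shuffles [] v = [v]"
| "shuffles (a # u) [] = [a # u]"
| "shuffles (a # u) (b # v) = map ((#) a) (shuffles u (b # v)) @ map ((#) b) (shuffles (a # u) v)"

lemma shuffles_Nil2 [simp]: "shuffles u [] = [u]"
  by (cases u) auto

lemma shuffles_length: "w \<in> set (shuffles u v) \<Longrightarrow> length w = length u + length v"
  by (induction u v arbitrary: w rule: shuffles.induct) auto

lemma sum_list_times_sum_list:
  "(\<Sum>x\<leftarrow>xs. f x) * (\<Sum>y\<leftarrow>ys. g y) = (\<Sum>x\<leftarrow>xs. \<Sum>y\<leftarrow>ys. (f x * g y :: real))"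
  by (induction xs) (simp_all add: distrib_right sum_list_const_mult)

lemma double_sum_shift:
  fixes f g :: "nat \<Rightarrow> nat \<Rightarrow> real"
  shows "(\<Sum>i\<le>Suc m. \<Sum>j\<le>Suc n. (if i = 0 \<and> j = 0 then c else 0) +
      (if 0 < i then f (i - 1) j else 0) + (if 0 < j then g i (j - 1) else 0)) =
    c + (\<Sum>i\<le>m. \<Sum>j\<le>Suc n. f i j) + (\<Sum>i\<le>Suc m. \<Sum>j\<le>n. g i j)"
proof -
  have c: "(\<Sum>i\<le>Suc m. \<Sum>j\<le>Suc n. (if i = 0 \<and> j = 0 then c else 0)) = c"
    by (simp add: sum.atMost_Suc_shift del: sum.atMost_Suc)
  have f: "(\<Sum>i\<le>Suc m. \<Sum>j\<le>Suc n. (if 0 < i then f (i - 1) j else 0)) =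
      (\<Sum>i\<le>m. \<Sum>j\<le>Suc n. f i j)"
    by (subst sum.atMost_Suc_shift) simp
  have g: "(\<Sum>i\<le>Suc m. \<Sum>j\<le>Suc n. (if 0 < j then g i (j - 1) else 0)) =
      (\<Sum>i\<le>Suc m. \<Sum>j\<le>n. g i j)"
    by (rule sum.cong[OF refl], subst sum.atMost_Suc_shift) simp
  show ?thesis by (simp only: sum.distrib c f g)
qed

text \<open>The bialgebra compatibility: the unshuffle coproduct is multiplicative for
  concatenation.\<close>

lemma sum_shuffles_deconcat:
  "(\<Sum>w\<leftarrow>shuffles u v. \<Sum>i\<le>length w. F (take i w) (drop i w)) =
   (\<Sum>i\<le>length u. \<Sum>j\<le>length v. \<Sum>w1\<leftarrow>shuffles (take i u) (take j v).
        \<Sum>w2\<leftarrow>shuffles (drop i u) (drop j v). (F w1 w2 :: real))"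
proof (induction u v arbitrary: F rule: shuffles.induct)
  case (1 v) then show ?case by simp
next
  case (2 a u) then show ?case by simp
next
  case (3 a u b v)
  define Ta where "Ta i j = (\<Sum>w1\<leftarrow>shuffles (take i u) (take j (b#v)).
        \<Sum>w2\<leftarrow>shuffles (drop i u) (drop j (b#v)). F (a#w1) w2)" for i j
  define Tb where "Tb i j = (\<Sum>w1\<leftarrow>shuffles (take i (a#u)) (take j v).
        \<Sum>w2\<leftarrow>shuffles (drop i (a#u)) (drop j v). F (b#w1) w2)" for i j
  define T0 where "T0 = (\<Sum>w\<leftarrow>shuffles (a#u) (b#v). F [] w)"
  have split_first: "(\<Sum>w\<leftarrow>shuffles (a#u) (b#v). G w) =
      (\<Sum>w\<leftarrow>shuffles u (b#v). G (a#w)) + (\<Sum>w\<leftarrow>shuffles (a#u) v. G (b#w))"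
    for G :: "nat list \<Rightarrow> real" by (simp add: o_def)
  have deconcat_Cons: "(\<Sum>i\<le>length (c#w). F (take i (c#w)) (drop i (c#w))) =
      F [] (c#w) + (\<Sum>i\<le>length w. F (c # take i w) (drop i w))" for c w
    by (simp add: sum.atMost_Suc_shift del: sum.atMost_Suc)
  have "(\<Sum>w\<leftarrow>shuffles (a#u) (b#v). \<Sum>i\<le>length w. F (take i w) (drop i w)) =
      T0 + (\<Sum>i\<le>length u. \<Sum>j\<le>Suc (length v). Ta i j) +
      (\<Sum>i\<le>Suc (length u). \<Sum>j\<le>length v. Tb i j)"
    using "3.IH"(1)[of "\<lambda>x y. F (a#x) y"] "3.IH"(2)[of "\<lambda>x y. F (b#x) y"]
    unfolding split_first deconcat_Cons sum_list_addf T0_def split_first[of "F []"]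
    by (simp add: Ta_def Tb_def)
  also have "\<dots> = (\<Sum>i\<le>Suc (length u). \<Sum>j\<le>Suc (length v).
      (if i = 0 \<and> j = 0 then T0 else 0) + (if 0 < i then Ta (i - 1) j else 0) +
      (if 0 < j then Tb i (j - 1) else 0))"
    by (rule double_sum_shift[symmetric])
  also have "\<dots> = (\<Sum>i\<le>length (a#u). \<Sum>j\<le>length (b#v).
      \<Sum>w1\<leftarrow>shuffles (take i (a#u)) (take j (b#v)).
        \<Sum>w2\<leftarrow>shuffles (drop i (a#u)) (drop j (b#v)). F w1 w2)"
  proof -
    have "(\<Sum>w1\<leftarrow>shuffles (take i (a#u)) (take j (b#v)).
        \<Sum>w2\<leftarrow>shuffles (drop i (a#u)) (drop j (b#v)). F w1 w2) =
      (if i = 0 \<and> j = 0 then T0 else 0) + (if 0 < i then Ta (i - 1) j else 0) +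
      (if 0 < j then Tb i (j - 1) else 0)" for i j
      by (cases i; cases j) (simp_all add: T0_def Ta_def Tb_def o_def)
    then show ?thesis by (simp only: length_Cons)
  qed
  finally show ?case .
qed

definition shuffle_coeff :: "(nat list \<Rightarrow> real) \<Rightarrow> nat list \<Rightarrow> nat list \<Rightarrow> real" where
  "shuffle_coeff f u v = (\<Sum>w\<leftarrow>shuffles u v. f w)"

lemma shuffle_coeff_mult:
  "shuffle_coeff (coef (x * y)) u v = (\<Sum>i\<le>length u. \<Sum>j\<le>length v.
     shuffle_coeff (coef x) (take i u) (take j v) * shuffle_coeff (coef y) (drop i u) (drop j v))"
  using sum_shuffles_deconcat[of "\<lambda>a b. coef x a * coef y b" u v]
  by (simp add: shuffle_coeff_def coef_mult sum_list_times_sum_list)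

lemma shuffle_coeff_cong:
  "(\<And>w. length w = length u + length v \<Longrightarrow> f w = g w) \<Longrightarrow> shuffle_coeff f u v = shuffle_coeff g u v"
  unfolding shuffle_coeff_def
  by (intro arg_cong[where f = sum_list] map_cong refl) (auto dest: shuffles_length)

lemma shuffle_coeff_add:
  "shuffle_coeff (\<lambda>w. f w + g w) u v = shuffle_coeff f u v + shuffle_coeff g u v"
  by (simp add: shuffle_coeff_def sum_list_addf)

lemma shuffle_coeff_diff:
  "shuffle_coeff (\<lambda>w. f w - g w) u v = shuffle_coeff f u v - shuffle_coeff g u v"
  by (simp add: shuffle_coeff_def sum_list_subtractf)

lemma shuffle_coeff_scale: "shuffle_coeff (\<lambda>w. c * f w) u v = c * shuffle_coeff f u v"
  by (simp add: shuffle_coeff_def sum_list_const_mult)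

lemma shuffle_coeff_zero: "shuffle_coeff (\<lambda>w. 0) u v = 0"
  by (simp add: shuffle_coeff_def)

lemma shuffle_coeff_sum:
  "finite A \<Longrightarrow> shuffle_coeff (\<lambda>w. \<Sum>n\<in>A. F n w) u v = (\<Sum>n\<in>A. shuffle_coeff (F n) u v)"
  by (induction A rule: finite_induct) (simp_all add: shuffle_coeff_zero shuffle_coeff_add)

lemma shuffle_coeff_one: "shuffle_coeff (coef 1) u v = (if u = [] \<and> v = [] then 1 else 0)"
proof -
  have "shuffle_coeff (coef 1) u v =
      shuffle_coeff (\<lambda>w. if length u + length v = 0 then coef 1 w else 0) u v"
    by (rule shuffle_coeff_cong) auto
  then show ?thesis by (auto simp: shuffle_coeff_def)
qed

text \<open>\<open>shuffle_coeff (coef x) u v\<close> is the \<open>u \<otimes> v\<close> coefficient of the unshuffle coproduct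
  \<open>\<Delta>x\<close>, so the two predicates say \<open>\<Delta>x = x \<otimes> 1 + 1 \<otimes> x\<close> and \<open>\<Delta>x = x \<otimes> x\<close>.\<close>

definition primitive :: "tseries \<Rightarrow> bool" where
  "primitive x \<longleftrightarrow> coef x [] = 0 \<and>
     (\<forall>u v. u \<noteq> [] \<longrightarrow> v \<noteq> [] \<longrightarrow> shuffle_coeff (coef x) u v = 0)"

definition group_like :: "tseries \<Rightarrow> bool" where
  "group_like x \<longleftrightarrow> coef x [] = 1 \<and> (\<forall>u v. shuffle_coeff (coef x) u v = coef x u * coef x v)"

lemma group_like_coef_Nil: "group_like x \<Longrightarrow> coef x [] = 1"
  by (simp add: group_like_def)

lemma primitive_vanishes_below_1: "primitive x \<Longrightarrow> vanishes_below 1 x"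
  by (simp add: primitive_def vanishes_below_def)

lemma shuffle_coeff_primitive:
  assumes "primitive x"
  shows "shuffle_coeff (coef x) u v =
    (if u = [] then coef x v else 0) + (if v = [] then coef x u else 0)"
  using assms by (cases "u = []"; cases "v = []") (auto simp: primitive_def shuffle_coeff_def)

lemma primitive_add: "primitive x \<Longrightarrow> primitive y \<Longrightarrow> primitive (x + y)"
  by (simp add: primitive_def coef_fun shuffle_coeff_add)

lemma primitive_scaleR: "primitive x \<Longrightarrow> primitive (c *\<^sub>R x)"
  by (simp add: primitive_def coef_fun shuffle_coeff_scale)

lemma primitive_uminus: "primitive x \<Longrightarrow> primitive (- x)"
  using primitive_scaleR[of x "-1"] by simp

lemma primitive_zero: "primitive 0"
  by (simp add: primitive_def coef_fun shuffle_coeff_zero)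

lemma double_sum_last_row_col:
  fixes S :: "nat \<Rightarrow> nat \<Rightarrow> real"
  shows "(\<Sum>i\<le>m. \<Sum>j\<le>n. S i j * ((if i = m then f j else 0) + (if j = n then g i else 0))) =
     (\<Sum>j\<le>n. S m j * f j) + (\<Sum>i\<le>m. S i n * g i)"
proof -
  have "(\<Sum>j\<le>n. S i j * ((if i = m then f j else 0) + (if j = n then g i else 0))) =
     (if i = m then (\<Sum>j\<le>n. S i j * f j) else 0) + S i n * g i" for i
    by (simp add: distrib_left sum.distrib if_distrib[of "\<lambda>x. S _ _ * x"] cong: if_cong)
  then show ?thesis by (simp add: sum.distrib)
qed

lemma primitive_commutator:
  assumes x: "primitive x" and y: "primitive y"
  shows "primitive (x * y - y * x)"
proof -
  have mult: "shuffle_coeff (coef (a * b)) u v = coef a v * coef b u + coef a u * coef b v"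
    if a: "primitive a" and b: "primitive b" and u: "u \<noteq> []" and v: "v \<noteq> []" for a b u v
  proof -
    have "shuffle_coeff (coef (a * b)) u v = (\<Sum>i\<le>length u. \<Sum>j\<le>length v.
       ((if i = 0 then coef a (take j v) else 0) + (if j = 0 then coef a (take i u) else 0)) *
       ((if i = length u then coef b (drop j v) else 0) +
        (if j = length v then coef b (drop i u) else 0)))"
      unfolding shuffle_coeff_mult using u v
      by (intro sum.cong refl)
        (auto simp: shuffle_coeff_primitive[OF a] shuffle_coeff_primitive[OF b])
    also have "\<dots> = coef a v * coef b u + coef a u * coef b v"
      using u v by (simp add: double_sum_last_row_col if_distrib[of "\<lambda>x. x * _"] cong: if_cong)
    finally show ?thesis .
  qed
  show ?thesis
    unfolding primitive_def
  proof (intro conjI allI impI)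
    show "coef (x * y - y * x) [] = 0" using x y by (simp add: primitive_def)
    fix u v :: "nat list" assume u: "u \<noteq> []" and v: "v \<noteq> []"
    show "shuffle_coeff (coef (x * y - y * x)) u v = 0"
      by (simp add: coef_fun shuffle_coeff_diff mult[OF x y u v] mult[OF y x u v])
  qed
qed

lemma group_like_mult:
  assumes x: "group_like x" and y: "group_like y"
  shows "group_like (x * y)"
  unfolding group_like_def
proof (intro conjI allI)
  show "coef (x * y) [] = 1" using x y by (simp add: group_like_def)
  fix u v :: "nat list"
  have "shuffle_coeff (coef (x * y)) u v = (\<Sum>i\<le>length u. \<Sum>j\<le>length v.
     (coef x (take i u) * coef y (drop i u)) * (coef x (take j v) * coef y (drop j v)))"
    unfolding shuffle_coeff_mult using x y
    by (intro sum.cong refl) (simp add: group_like_def algebra_simps)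
  also have "\<dots> = coef (x * y) u * coef (x * y) v"
    by (simp add: coef_mult sum_product)
  finally show "shuffle_coeff (coef (x * y)) u v = coef (x * y) u * coef (x * y) v" .
qed

definition divided_power :: "nat \<Rightarrow> tseries \<Rightarrow> tseries" where
  "divided_power n z = (1 / fact n) *\<^sub>R z ^ n"

lemma coef_Exp_divided_power: "coef (Exp z) w = (\<Sum>n\<le>length w. coef (divided_power n z) w)"
  by (simp add: coef_Exp divided_power_def)

lemma coef_divided_power_eq_0:
  "vanishes_below 1 z \<Longrightarrow> length w < n \<Longrightarrow> coef (divided_power n z) w = 0"
  by (simp add: divided_power_def coef_power_eq_0)

lemma divided_power_Suc: "divided_power (Suc n) z = (1 / real (Suc n)) *\<^sub>R (divided_power n z * z)"
proof -
  have "(1 / fact (Suc n) :: real) = 1 / real (Suc n) * (1 / fact n)" by simp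
  then show ?thesis by (simp add: divided_power_def power_commutes)
qed

lemma shuffle_coeff_divided_power:
  assumes z: "primitive z"
  shows "shuffle_coeff (coef (divided_power n z)) u v =
    (\<Sum>p\<le>n. coef (divided_power p z) u * coef (divided_power (n - p) z) v)"
proof (induction n arbitrary: u v)
  case 0
  have "divided_power 0 z = 1" by (simp add: divided_power_def)
  then show ?case by (simp only: shuffle_coeff_one) simp
next
  case (Suc n)
  let ?E = "\<lambda>p. divided_power p z"
  have E_mult: "coef (?E m * z) w = real (Suc m) * coef (?E (Suc m)) w" for m w
    by (simp add: divided_power_Suc)
  have "shuffle_coeff (coef (?E n * z)) u v = (\<Sum>i\<le>length u. \<Sum>j\<le>length v.
      shuffle_coeff (coef (?E n)) (take i u) (take j v) *
      ((if i = length u then coef z (drop j v) else 0) +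
       (if j = length v then coef z (drop i u) else 0)))"
    unfolding shuffle_coeff_mult by (intro sum.cong refl) (auto simp: shuffle_coeff_primitive[OF z])
  also have "\<dots> = (\<Sum>j\<le>length v. shuffle_coeff (coef (?E n)) u (take j v) * coef z (drop j v)) +
      (\<Sum>i\<le>length u. shuffle_coeff (coef (?E n)) (take i u) v * coef z (drop i u))"
    by (subst double_sum_last_row_col) simp
  also have "\<dots> = (\<Sum>p\<le>n. coef (?E p) u * coef (?E (n - p) * z) v) +
      (\<Sum>p\<le>n. coef (?E p * z) u * coef (?E (n - p)) v)"
    by (simp add: Suc.IH coef_mult sum_distrib_left sum_distrib_right mult_ac
        sum.swap[of _ "{..n}"])
  also have "\<dots> = (\<Sum>p\<le>n. real (Suc n - p) * (coef (?E p) u * coef (?E (Suc n - p)) v)) +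
      (\<Sum>p\<le>n. real (Suc p) * (coef (?E (Suc p)) u * coef (?E (Suc n - Suc p)) v))"
    by (intro arg_cong2[where f = "(+)"] sum.cong refl) (simp_all add: E_mult Suc_diff_le)
  also have "\<dots> = (\<Sum>p\<le>Suc n. real (Suc n - p) * (coef (?E p) u * coef (?E (Suc n - p)) v)) +
      (\<Sum>p\<le>Suc n. real p * (coef (?E p) u * coef (?E (Suc n - p)) v))"
    by (simp only: sum.atMost_Suc_shift[of "\<lambda>p. real p * _ p"] sum.atMost_Suc) simp
  \<comment> \<open>the two boundary sums recombine because \<open>(n + 1 - p) + p = n + 1\<close>\<close>
  also have "\<dots> = real (Suc n) * (\<Sum>p\<le>Suc n. coef (?E p) u * coef (?E (Suc n - p)) v)"
    by (simp add: sum.distrib[symmetric] sum_distrib_left algebra_simps of_nat_diff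
        del: of_nat_Suc sum.atMost_Suc)
  finally show ?case
    unfolding divided_power_Suc[of n] coef_fun shuffle_coeff_scale by simp
qed

lemma group_like_Exp:
  assumes z: "primitive z"
  shows "group_like (Exp z)"
  unfolding group_like_def
proof (intro conjI allI)
  show "coef (Exp z) [] = 1" by simp
  fix u v :: "nat list"
  let ?N = "length u + length v" and ?E = "\<lambda>p. divided_power p z"
  have "shuffle_coeff (coef (Exp z)) u v = shuffle_coeff (\<lambda>w. \<Sum>n\<le>?N. coef (?E n) w) u v"
    by (rule shuffle_coeff_cong) (simp add: coef_Exp_divided_power)
  also have "\<dots> = (\<Sum>n\<le>?N. \<Sum>p\<le>n. coef (?E p) u * coef (?E (n - p)) v)"
    by (simp add: shuffle_coeff_sum shuffle_coeff_divided_power[OF z])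
  also have "\<dots> = (\<Sum>(p,q)\<in>{(p,q). p + q \<le> ?N}. coef (?E p) u * coef (?E q) v)"
    by (rule sum.triangle_reindex_eq[symmetric])
  also have "\<dots> = (\<Sum>(p,q)\<in>{..length u} \<times> {..length v}. coef (?E p) u * coef (?E q) v)"
  proof (rule sum.mono_neutral_right)
    show "finite {(p,q). p + q \<le> ?N}"
      by (rule finite_subset[of _ "{..?N} \<times> {..?N}"]) auto
    have "p \<le> length w" if "coef (?E p) w \<noteq> 0" for p w
      using coef_divided_power_eq_0[OF primitive_vanishes_below_1[OF z]] that by (meson not_le)
    then show "\<forall>i\<in>{(p,q). p + q \<le> ?N} - {..length u} \<times> {..length v}.
        (case i of (p, q) \<Rightarrow> coef (?E p) u * coef (?E q) v) = 0"
      by auto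
  qed auto
  also have "\<dots> = coef (Exp z) u * coef (Exp z) v"
    by (simp add: sum_product sum.cartesian_product coef_Exp_divided_power)
  finally show "shuffle_coeff (coef (Exp z)) u v = coef (Exp z) u * coef (Exp z) v" .
qed

lemma eq_upto_power_add:
  assumes p: "vanishes_below 1 p" and h: "vanishes_below n h" and n: "1 \<le> n"
  shows "eq_upto n ((p + h) ^ m) (p ^ m + (if m = 1 then h else 0))"
proof (induction m)
  case 0 then show ?case by simp
next
  case (Suc m)
  have IH: "eq_upto n ((p + h) ^ Suc m) ((p ^ m + (if m = 1 then h else 0)) * (p + h))"
    unfolding power_Suc2 by (rule eq_upto_mult[OF Suc.IH eq_upto_refl])
  show ?case
  proof (cases "m = 0")
    case True then show ?thesis using IH by simp
  next
    case False
    define e where "e = (if m = 1 then h else 0)"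
    have e: "vanishes_below n e" using h by (simp add: e_def vanishes_below_def)
    have "vanishes_below (Suc n) (p ^ m * h)"
      using vanishes_below_mult[OF vanishes_below_power[OF p, of m] h] False
      by (auto intro: vanishes_below_mono)
    moreover have "vanishes_below (Suc n) (e * p)"
      using vanishes_below_mult[OF e p] by simp
    moreover have "vanishes_below (Suc n) (e * h)"
      using vanishes_below_mult[OF e h] n by (auto intro: vanishes_below_mono)
    ultimately have "eq_upto n (p ^ m * h + e * p + e * h) 0"
      by (intro vanishes_below_Suc_eq_upto_0 vanishes_below_add)
    then have "eq_upto n (p ^ Suc m + (p ^ m * h + e * p + e * h)) (p ^ Suc m + 0)"
      by (intro eq_upto_add) auto
    moreover have "(p ^ m + e) * (p + h) = p ^ Suc m + (p ^ m * h + e * p + e * h)"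
      by (simp add: algebra_simps power_commutes)
    ultimately have "eq_upto n ((p ^ m + e) * (p + h)) (p ^ Suc m)" by simp
    then show ?thesis using IH False by (auto simp: e_def intro: eq_upto_trans)
  qed
qed

lemma eq_upto_Exp_add:
  assumes p: "vanishes_below 1 p" and h: "vanishes_below n h" and n: "1 \<le> n"
  shows "eq_upto n (Exp (p + h)) (Exp p + h)"
  unfolding eq_upto_def
proof (intro allI impI)
  fix w :: "nat list" assume w: "length w \<le> n"
  have ph: "vanishes_below 1 (p + h)"
    using p h n by (auto intro: vanishes_below_add vanishes_below_mono)
  have "coef (Exp (p + h)) w = (\<Sum>m\<le>n. coef ((p + h) ^ m) w / fact m)"
    by (rule coef_Exp_upto[OF ph w])
  also have "\<dots> = (\<Sum>m\<le>n. coef (p ^ m) w / fact m + (if m = 1 then coef h w else 0))"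
    using eq_upto_power_add[OF assms] w
    by (intro sum.cong refl) (auto simp: eq_upto_def add_divide_distrib)
  also have "\<dots> = coef (Exp p) w + coef h w"
    using n by (simp add: sum.distrib coef_Exp_upto[OF p w])
  finally show "coef (Exp (p + h)) w = coef (Exp p + h) w" by simp
qed

definition homogeneous_part :: "nat \<Rightarrow> tseries \<Rightarrow> tseries" where
  "homogeneous_part n x = TS (\<lambda>w. if length w = n then coef x w else 0)"

lemma primitive_homogeneous_part:
  assumes "\<And>u v. u \<noteq> [] \<Longrightarrow> v \<noteq> [] \<Longrightarrow> length u + length v = Suc n \<Longrightarrow>
      shuffle_coeff (coef x) u v = 0"
  shows "primitive (homogeneous_part (Suc n) x)"
  unfolding primitive_def
proof (intro conjI allI impI)
  show "coef (homogeneous_part (Suc n) x) [] = 0" by (simp add: homogeneous_part_def)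
  fix u v :: "nat list" assume "u \<noteq> []" "v \<noteq> []"
  have "shuffle_coeff (coef (homogeneous_part (Suc n) x)) u v =
      shuffle_coeff (\<lambda>w. if length u + length v = Suc n then coef x w else 0) u v"
    by (rule shuffle_coeff_cong) (simp add: homogeneous_part_def)
  then show "shuffle_coeff (coef (homogeneous_part (Suc n) x)) u v = 0"
    using assms \<open>u \<noteq> []\<close> \<open>v \<noteq> []\<close>
    by (cases "length u + length v = Suc n") (simp_all add: shuffle_coeff_def)
qed

text \<open>If the group-like \<open>Exp z\<close> agrees with \<open>Exp p\<close> for a primitive \<open>p\<close> up to level \<open>n\<close>,
  the first discrepancy \<open>h\<close> enters \<open>Exp z\<close> linearly, and the group-like identity at level
  \<open>n + 1\<close> forces \<open>h\<close> to be primitive there.\<close>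

lemma primitive_next_level:
  assumes x: "group_like (Exp z)" and p: "primitive p" and zp: "eq_upto n z p"
  shows "primitive (homogeneous_part (Suc n) (z - p))"
proof (rule primitive_homogeneous_part)
  fix u v :: "nat list"
  assume u: "u \<noteq> []" and v: "v \<noteq> []" and uv: "length u + length v = Suc n"
  define h where "h = z - p"
  have h: "vanishes_below (Suc n) h" using zp by (auto simp: vanishes_below_def eq_upto_def h_def)
  have e: "eq_upto (Suc n) (Exp z) (Exp p + h)"
    using eq_upto_Exp_add[OF primitive_vanishes_below_1[OF p] h] by (simp add: h_def)
  have "shuffle_coeff (coef (Exp z)) u v = shuffle_coeff (coef (Exp p + h)) u v"
    by (rule shuffle_coeff_cong) (use e uv in \<open>auto simp: eq_upto_def\<close>)
  also have "\<dots> = coef (Exp p) u * coef (Exp p) v + shuffle_coeff (coef h) u v"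
    using group_like_Exp[OF p] by (simp add: coef_fun shuffle_coeff_add group_like_def)
  finally have "shuffle_coeff (coef (Exp z)) u v =
      coef (Exp p) u * coef (Exp p) v + shuffle_coeff (coef h) u v" .
  moreover have "length u < Suc n" "length v < Suc n"
    using uv u v by (auto simp: neq_Nil_conv)
  then have "coef (Exp z) u = coef (Exp p) u" "coef (Exp z) v = coef (Exp p) v"
    using e h by (auto simp: eq_upto_def vanishes_below_def)
  ultimately show "shuffle_coeff (coef (z - p)) u v = 0"
    using x by (simp add: group_like_def h_def)
qed

lemma primitive_Log:
  assumes x: "group_like x"
  shows "primitive (Log x)"
proof -
  define z where "z = Log x"
  have x_eq: "Exp z = x" unfolding z_def by (rule Exp_Log[OF group_like_coef_Nil[OF x]])
  have approx: "\<exists>p. primitive p \<and> eq_upto n z p" for n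
  proof (induction n)
    case 0
    show ?case
      by (intro exI[of _ 0]) (simp add: primitive_zero eq_upto_def z_def)
  next
    case (Suc n)
    then obtain p where p: "primitive p" and zp: "eq_upto n z p" by blast
    have "primitive (p + homogeneous_part (Suc n) (z - p))"
      using primitive_next_level[OF _ p zp] x_eq x by (intro primitive_add p) simp
    moreover have "eq_upto (Suc n) z (p + homogeneous_part (Suc n) (z - p))"
      using zp by (auto simp: eq_upto_def homogeneous_part_def le_Suc_eq)
    ultimately show ?case by blast
  qed
  show ?thesis unfolding z_def[symmetric] primitive_def
  proof (intro conjI allI impI)
    show "coef z [] = 0" by (simp add: z_def)
    fix u v :: "nat list" assume "u \<noteq> []" "v \<noteq> []"
    obtain p where p: "primitive p" and zp: "eq_upto (length u + length v) z p"
      using approx by blast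
    have "shuffle_coeff (coef z) u v = shuffle_coeff (coef p) u v"
      by (rule shuffle_coeff_cong) (use zp in \<open>auto simp: eq_upto_def\<close>)
    then show "shuffle_coeff (coef z) u v = 0"
      using p \<open>u \<noteq> []\<close> \<open>v \<noteq> []\<close> by (simp add: primitive_def)
  qed
qed

lemma group_like_Inv: "group_like x \<Longrightarrow> group_like (Inv x)"
  unfolding Inv_def by (intro group_like_Exp primitive_uminus primitive_Log)

section \<open>The Dynkin--Specht--Wever expansion\<close>

lemma count_list_map_Cons:
  "count_list (map ((#) a) xs) (c # w) = (if a = c then count_list xs w else 0)"
  by (induction xs) auto

lemma count_list_shuffles_Cons: "count_list (shuffles p q) (c # w) =
   (if p \<noteq> [] \<and> hd p = c then count_list (shuffles (tl p) q) w else 0) +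
   (if q \<noteq> [] \<and> hd q = c then count_list (shuffles p (tl q)) w else 0)"
  by (cases p; cases q) (auto simp: count_list_map_Cons)

lemma mset_shuffles_snoc: "mset (shuffles p q) = (if p = [] \<and> q = [] then {#[]#} else {#}) +
   (if p = [] then {#} else image_mset (\<lambda>w. w @ [last p]) (mset (shuffles (butlast p) q))) +
   (if q = [] then {#} else image_mset (\<lambda>w. w @ [last q]) (mset (shuffles p (butlast q))))"
proof (induction p q rule: shuffles.induct)
  case (1 v) then show ?case by (cases v rule: rev_cases) auto
next
  case (2 a u) then show ?case by (cases u rule: rev_cases) auto
next
  case (3 a u b v)
  then show ?case
    by (cases "u = []"; cases "v = []") (simp_all add: multiset.map_comp o_def add_ac)
qed

lemma count_image_mset_snoc:
  "count (image_mset (\<lambda>w. w @ [a]) M) (x @ [c]) = (if a = c then count M x else 0)"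
proof -
  have "(\<lambda>w. w @ [a]) -` {x @ [c]} = (if a = c then {x} else {})" by auto
  then show ?thesis by (cases "x \<in># M") (auto simp: count_image_mset not_in_iff)
qed

lemma count_list_shuffles_snoc: "count_list (shuffles p q) (w @ [c]) =
   (if p \<noteq> [] \<and> last p = c then count_list (shuffles (butlast p) q) w else 0) +
   (if q \<noteq> [] \<and> last q = c then count_list (shuffles p (butlast q)) w else 0)"
  by (subst count_mset[symmetric], subst mset_shuffles_snoc)
    (simp add: count_image_mset_snoc count_mset)

definition shuffle_count :: "nat list \<Rightarrow> nat \<Rightarrow> nat list \<Rightarrow> real" where
  "shuffle_count y i w = real (count_list (shuffles (rev (take i y)) (drop i y)) w)"

lemma shuffle_count_eq_0: "length w \<noteq> length y \<Longrightarrow> i \<le> length y \<Longrightarrow> shuffle_count y i w = 0"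
  by (auto simp: shuffle_count_def count_list_0_iff dest: shuffles_length)

lemma shuffle_count_Cons:
  fixes c :: nat and w y :: "nat list"
  assumes i: "i \<le> length y"
  defines "U \<equiv> \<lambda>j. if j < length y \<and> y ! j = c
    then real (count_list (shuffles (rev (take j y)) (drop (Suc j) y)) w) else 0"
  shows "shuffle_count y i (c # w) = (if i = 0 then 0 else U (i - 1)) + U i"
proof -
  have first: "(if rev (take i y) \<noteq> [] \<and> hd (rev (take i y)) = c
        then count_list (shuffles (tl (rev (take i y))) (drop i y)) w else 0) =
      (if i = 0 then 0 else if y ! (i - 1) = c
        then count_list (shuffles (rev (take (i - 1) y)) (drop i y)) w else 0)"
  proof (cases i)
    case (Suc j)
    then have "take i y = take j y @ [y ! j]" using i by (simp add: take_Suc_conv_app_nth)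
    then show ?thesis using Suc by simp
  qed simp
  have second: "(if drop i y \<noteq> [] \<and> hd (drop i y) = c
        then count_list (shuffles (rev (take i y)) (tl (drop i y))) w else 0) =
      (if i < length y \<and> y ! i = c
        then count_list (shuffles (rev (take i y)) (drop (Suc i) y)) w else 0)"
    using i by (auto simp: hd_drop_conv_nth drop_Suc tl_drop)
  show ?thesis
    unfolding shuffle_count_def count_list_shuffles_Cons of_nat_add
    using i by (subst first, subst second) (auto simp: U_def)
qed

text \<open>For \<open>y \<noteq> []\<close> the alternating sum of the shuffles of \<open>rev (take i y)\<close> and \<open>drop i y\<close>
  vanishes: the antipode identity of the shuffle Hopf algebra.\<close>

definition antipode_sum :: "nat list \<Rightarrow> nat list \<Rightarrow> real" where
  "antipode_sum y w = (\<Sum>i\<le>length y. (-1) ^ i * shuffle_count y i w)"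

lemma antipode_sum_Cons: "antipode_sum y (c # w) = 0"
proof -
  define U where "U = (\<lambda>j. if j < length y \<and> y ! j = c
    then real (count_list (shuffles (rev (take j y)) (drop (Suc j) y)) w) else 0)"
  have shift: "shuffle_count y i (c # w) = (if i = 0 then 0 else U (i - 1)) + U i"
    if "i \<le> length y" for i
    unfolding U_def by (rule shuffle_count_Cons[OF that])
  have "antipode_sum y (c # w) =
      (\<Sum>i\<le>length y. (-1) ^ i * (if i = 0 then 0 else U (i - 1))) + (\<Sum>i\<le>length y. (-1) ^ i * U i)"
    unfolding antipode_sum_def
    by (simp add: shift distrib_left sum.distrib)
  also have "\<dots> = 0"
  proof (cases "length y")
    case 0 then show ?thesis by (simp add: U_def)
  next
    case (Suc m)
    have "(\<Sum>i\<le>length y. (-1) ^ i * (if i = 0 then 0 else U (i - 1))) = - (\<Sum>j\<le>m. (-1) ^ j * U j)"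
      unfolding Suc by (subst sum.atMost_Suc_shift) (simp add: sum_negf)
    moreover have "(\<Sum>i\<le>length y. (-1) ^ i * U i) = (\<Sum>j\<le>m. (-1) ^ j * U j)"
      unfolding Suc by (simp add: U_def Suc)
    ultimately show ?thesis by simp
  qed
  finally show ?thesis .
qed

lemma shuffle_count_snoc:
  assumes x: "x \<noteq> []" and i: "i \<le> length x"
  shows "shuffle_count x i (w @ [a]) =
    (if i \<noteq> 0 \<and> hd x = a then shuffle_count (tl x) (i - 1) w else 0) +
    (if i < length x \<and> last x = a then shuffle_count (butlast x) i w else 0)"
proof -
  obtain h t where ht: "x = h # t" using x by (cases x) auto
  obtain b l where bl: "x = b @ [l]" using x by (cases x rule: rev_cases) auto
  have first: "(if rev (take i x) \<noteq> [] \<and> last (rev (take i x)) = a then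
        real (count_list (shuffles (butlast (rev (take i x))) (drop i x)) w) else 0) =
      (if i \<noteq> 0 \<and> hd x = a then shuffle_count (tl x) (i - 1) w else 0)"
    unfolding ht shuffle_count_def by (cases i) auto
  have second: "(if drop i x \<noteq> [] \<and> last (drop i x) = a then
        real (count_list (shuffles (rev (take i x)) (butlast (drop i x))) w) else 0) =
      (if i < length x \<and> last x = a then shuffle_count (butlast x) i w else 0)"
  proof (cases "i = length x")
    case False
    then have "i \<le> length b" using i bl by simp
    then show ?thesis unfolding bl shuffle_count_def by (auto simp: drop_append take_append)
  qed simp
  show ?thesis
    unfolding shuffle_count_def[of x] count_list_shuffles_snoc of_nat_add
    by (subst first[symmetric], subst second[symmetric]) simp
qed

definition letter :: "nat \<Rightarrow> tseries" where
  "letter a = TS (\<lambda>w. if w = [a] then 1 else 0)"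

text \<open>\<open>rbracket (rev w)\<close> is the left-normed bracket \<open>[[w\<^sub>1, w\<^sub>2], \<dots>, w\<^sub>n]\<close>.\<close>

fun rbracket :: "nat list \<Rightarrow> tseries" where
  "rbracket [] = 0"
| "rbracket (a # u) = (if u = [] then letter a else rbracket u * letter a - letter a * rbracket u)"

lemma coef_mult_letter:
  "coef (x * letter a) w = (if w \<noteq> [] \<and> last w = a then coef x (butlast w) else 0)"
proof (cases w rule: rev_cases)
  case (snoc w' b)
  have "coef (x * letter a) w =
      (\<Sum>i\<le>Suc (length w'). if i = length w' then (if b = a then coef x w' else 0) else 0)"
    unfolding coef_mult snoc
    by (rule sum.cong) (auto simp: letter_def drop_append Suc_diff_le le_Suc_eq)
  then show ?thesis using snoc by simp
qed (simp add: coef_mult letter_def)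

lemma coef_letter_mult:
  "coef (letter a * x) w = (if w \<noteq> [] \<and> hd w = a then coef x (tl w) else 0)"
proof (cases w)
  case (Cons b w')
  have "coef (letter a * x) w =
      (\<Sum>i\<le>Suc (length w'). if i = 1 then (if b = a then coef x w' else 0) else 0)"
    unfolding coef_mult Cons
  proof (rule sum.cong)
    fix i assume "i \<in> {..Suc (length w')}"
    then show "coef (letter a) (take i (b # w')) * coef x (drop i (b # w')) =
        (if i = 1 then if b = a then coef x w' else 0 else 0)"
      by (cases i; cases w') (auto simp: letter_def)
  qed simp
  also have "\<dots> = (if b = a then coef x w' else 0)" by (subst sum.delta) auto
  finally show ?thesis using Cons by simp
qed (simp add: coef_mult letter_def)

text \<open>The coefficient of \<open>x\<close> in \<open>rbracket (rev w)\<close> (see \<open>coef_rbracket\<close>), written as a signed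
  count of shuffles so that primitivity can be applied to it.\<close>

definition bracket_coef :: "nat list \<Rightarrow> nat list \<Rightarrow> real" where
  "bracket_coef x w = (\<Sum>i\<le>length x. (-1) ^ i * real (length x - i) * shuffle_count x i w)"

lemma bracket_coef_eq_0: "length w \<noteq> length x \<Longrightarrow> bracket_coef x w = 0"
  by (simp add: bracket_coef_def shuffle_count_eq_0)

lemma bracket_coef_single: "bracket_coef x [a] = (if x = [a] then 1 else 0)"
proof (cases "length x = 1")
  case True
  then obtain b where "x = [b]" by (cases x) auto
  then show ?thesis by (simp add: bracket_coef_def shuffle_count_def)
qed (auto simp: bracket_coef_eq_0)

lemma bracket_coef_snoc:
  assumes w: "w \<noteq> []" and x: "x \<noteq> []"
  shows "bracket_coef x (w @ [a]) =
    (if last x = a then bracket_coef (butlast x) w else 0) -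
    (if hd x = a then bracket_coef (tl x) w else 0)"
proof -
  define m where "m = length (tl x)"
  have len: "length x = Suc m" "length (butlast x) = m" using x by (simp_all add: m_def)
  let ?c = "\<lambda>i. (-1) ^ i * real (Suc m - i) :: real"
  have "bracket_coef x (w @ [a]) =
      (\<Sum>i\<le>Suc m. ?c i * (if i \<noteq> 0 \<and> hd x = a then shuffle_count (tl x) (i - 1) w else 0)) +
      (\<Sum>i\<le>Suc m. ?c i * (if i < Suc m \<and> last x = a then shuffle_count (butlast x) i w else 0))"
    unfolding bracket_coef_def len sum.distrib[symmetric]
    by (intro sum.cong refl) (simp add: shuffle_count_snoc[OF x] len distrib_left)
  also have "(\<Sum>i\<le>Suc m. ?c i * (if i \<noteq> 0 \<and> hd x = a then shuffle_count (tl x) (i - 1) w else 0)) =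
      - (if hd x = a then bracket_coef (tl x) w else 0)"
    by (subst sum.atMost_Suc_shift) (simp add: bracket_coef_def m_def sum_negf sum_distrib_left)
  also have "(\<Sum>i\<le>Suc m.
      ?c i * (if i < Suc m \<and> last x = a then shuffle_count (butlast x) i w else 0)) =
      (if last x = a then bracket_coef (butlast x) w + antipode_sum (butlast x) w else 0)"
    unfolding bracket_coef_def antipode_sum_def len sum.distrib[symmetric]
    by (auto intro!: sum.cong simp: Suc_diff_le algebra_simps)
  finally show ?thesis
    using w by (cases w) (simp_all add: antipode_sum_Cons)
qed

lemma coef_rbracket: "coef (rbracket (rev w)) x = bracket_coef x w"
proof (induction w arbitrary: x rule: rev_induct)
  case Nil
  show ?case
    by (cases "x = []") (simp add: bracket_coef_def, simp add: bracket_coef_eq_0)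
next
  case (snoc a w)
  show ?case
  proof (cases "w = []")
    case True then show ?thesis by (simp add: bracket_coef_single letter_def)
  next
    case False
    then show ?thesis
      by (cases "x = []")
        (simp_all add: coef_letter_mult coef_mult_letter snoc.IH bracket_coef_snoc
          bracket_coef_eq_0)
  qed
qed

lemma sum_mult_count_list:
  assumes "finite W" "\<And>w. f w \<noteq> 0 \<Longrightarrow> w \<in> W"
  shows "(\<Sum>w\<in>W. f w * real (count_list L w)) = (\<Sum>w\<leftarrow>L. (f w :: real))"
proof (induction L)
  case (Cons a L)
  have "f w * real (count_list (a # L) w) =
      (if w = a then f a else 0) + f w * real (count_list L w)" for w by (auto simp: algebra_simps)
  then have "(\<Sum>w\<in>W. f w * real (count_list (a # L) w)) =
      (\<Sum>w\<in>W. if w = a then f a else 0) + (\<Sum>w\<in>W. f w * real (count_list L w))"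
    by (simp add: sum.distrib)
  also have "(\<Sum>w\<in>W. if w = a then f a else 0) = f a"
    using assms by (auto simp: sum.delta')
  finally show ?case using Cons by simp
qed simp

lemma primitive_sum_bracket_coef:
  assumes W: "finite W" "\<And>w. coef z w \<noteq> 0 \<Longrightarrow> w \<in> W" and z: "primitive z"
  shows "(\<Sum>w\<in>W. coef z w * bracket_coef x w) = real (length x) * coef z x"
proof -
  let ?n = "length x"
  have "(\<Sum>w\<in>W. coef z w * bracket_coef x w) =
      (\<Sum>i\<le>?n. (-1) ^ i * real (?n - i) * (\<Sum>w\<in>W. coef z w * shuffle_count x i w))"
    unfolding bracket_coef_def
    by (simp add: sum_distrib_left sum_distrib_right mult_ac sum.swap[of _ W])
  also have "\<dots> = (\<Sum>i\<le>?n. (-1) ^ i * real (?n - i) *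
      shuffle_coeff (coef z) (rev (take i x)) (drop i x))"
    unfolding shuffle_count_def shuffle_coeff_def using sum_mult_count_list[OF W] by simp
  also have "\<dots> = (\<Sum>i\<le>?n. if i = 0 then real ?n * coef z x else 0)"
  proof (intro sum.cong refl)
    fix i assume i: "i \<in> {..?n}"
    show "(-1) ^ i * real (?n - i) * shuffle_coeff (coef z) (rev (take i x)) (drop i x) =
        (if i = 0 then real ?n * coef z x else 0)"
    proof (cases "i = 0 \<or> i = ?n")
      case False
      then have "rev (take i x) \<noteq> []" "drop i x \<noteq> []" using i by auto
      then show ?thesis using False z by (simp add: primitive_def)
    qed (auto simp: shuffle_coeff_def)
  qed
  also have "\<dots> = real ?n * coef z x" by simp
  finally show ?thesis .
qed

section \<open>Truncation to the tensor algebra and the group\<close>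

definition in_alphabet :: "nat \<Rightarrow> tseries \<Rightarrow> bool" where
  "in_alphabet d x \<longleftrightarrow> (\<forall>w. coef x w \<noteq> 0 \<longrightarrow> set w \<subseteq> {..<d})"

lemma in_alphabet_add: "in_alphabet d x \<Longrightarrow> in_alphabet d y \<Longrightarrow> in_alphabet d (x + y)"
  unfolding in_alphabet_def by (metis add.right_neutral add_0 coef_simps(3))

lemma in_alphabet_diff: "in_alphabet d x \<Longrightarrow> in_alphabet d y \<Longrightarrow> in_alphabet d (x - y)"
  unfolding in_alphabet_def by (metis diff_zero diff_0 coef_simps(4) neg_0_equal_iff_equal)

lemma in_alphabet_uminus: "in_alphabet d x \<Longrightarrow> in_alphabet d (- x)"
  by (auto simp: in_alphabet_def)

lemma in_alphabet_scaleR: "in_alphabet d x \<Longrightarrow> in_alphabet d (c *\<^sub>R x)"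
  by (auto simp: in_alphabet_def)

lemma in_alphabet_one: "in_alphabet d 1"
  by (auto simp: in_alphabet_def)

lemma in_alphabet_letter: "i < d \<Longrightarrow> in_alphabet d (letter i)"
  by (simp add: in_alphabet_def letter_def)

lemma in_alphabet_mult:
  assumes "in_alphabet d x" "in_alphabet d y"
  shows "in_alphabet d (x * y)"
  unfolding in_alphabet_def
proof (intro allI impI)
  fix w assume "coef (x * y) w \<noteq> 0"
  then obtain i where "coef x (take i w) \<noteq> 0" "coef y (drop i w) \<noteq> 0"
    unfolding coef_mult by (metis (no_types, lifting) mult_eq_0_iff sum.neutral)
  then have "set (take i w) \<subseteq> {..<d}" "set (drop i w) \<subseteq> {..<d}"
    using assms by (auto simp: in_alphabet_def)
  then show "set w \<subseteq> {..<d}" by (metis append_take_drop_id set_append Un_subset_iff)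
qed

lemma in_alphabet_power: "in_alphabet d x \<Longrightarrow> in_alphabet d (x ^ n)"
  by (induction n) (auto intro: in_alphabet_mult in_alphabet_one)

lemma in_alphabet_fps_eval:
  assumes "in_alphabet d y"
  shows "in_alphabet d (fps_eval p y)"
  unfolding in_alphabet_def
proof (intro allI impI)
  fix w assume "coef (fps_eval p y) w \<noteq> 0"
  then obtain n where "coef (y ^ n) w \<noteq> 0"
    unfolding coef_fps_eval by (metis (no_types, lifting) mult_eq_0_iff sum.neutral)
  then show "set w \<subseteq> {..<d}" using in_alphabet_power[OF assms, of n] by (auto simp: in_alphabet_def)
qed

lemma in_alphabet_Exp: "in_alphabet d x \<Longrightarrow> in_alphabet d (Exp x)"
  unfolding Exp_def by (rule in_alphabet_fps_eval)

lemma in_alphabet_Log: "in_alphabet d x \<Longrightarrow> in_alphabet d (Log x)"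
  unfolding Log_def by (intro in_alphabet_fps_eval in_alphabet_diff in_alphabet_one)

lemma in_alphabet_Inv: "in_alphabet d x \<Longrightarrow> in_alphabet d (Inv x)"
  unfolding Inv_def by (intro in_alphabet_Exp in_alphabet_uminus in_alphabet_Log)

definition trunc :: "nat \<Rightarrow> tseries \<Rightarrow> tensor" where
  "trunc k x = (\<lambda>w. if length w \<le> k then coef x w else 0)"

lemma trunc_eq_iff: "trunc k x = trunc k y \<longleftrightarrow> eq_upto k x y"
  by (auto simp: trunc_def eq_upto_def fun_eq_iff)

lemma trunc_eq_0_iff: "trunc k x = 0 \<longleftrightarrow> eq_upto k x 0"
  by (auto simp: trunc_def eq_upto_def fun_eq_iff)

lemma eq_upto_TS_trunc: "eq_upto k (TS (trunc k x)) x"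
  by (simp add: eq_upto_def trunc_def)

lemma trunc_TS: "a \<in> Tset d k \<Longrightarrow> trunc k (TS a) = a"
  by (auto simp: Tset_def trunc_def fun_eq_iff)

lemma trunc_in_Tset: "in_alphabet d x \<Longrightarrow> trunc k x \<in> Tset d k"
  by (auto simp: Tset_def trunc_def in_alphabet_def)

lemma Tset_in_alphabet: "a \<in> Tset d k \<Longrightarrow> in_alphabet d (TS a)"
  by (auto simp: Tset_def in_alphabet_def)

lemma trunc_add: "trunc k (x + y) = trunc k x + trunc k y"
  by (simp add: trunc_def fun_eq_iff)

lemma trunc_diff: "trunc k (x - y) = trunc k x - trunc k y"
  by (simp add: trunc_def fun_eq_iff)

lemma trunc_zero: "trunc k 0 = 0"
  by (simp add: trunc_def fun_eq_iff)

lemma trunc_scaleR: "trunc k (c *\<^sub>R x) = tsmul c (trunc k x)"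
  by (simp add: trunc_def tsmul_def fun_eq_iff)

lemma trunc_sum: "trunc k (\<Sum>i\<in>A. f i) = (\<Sum>i\<in>A. trunc k (f i))"
proof -
  have "(\<Sum>i\<in>A. g i) w = (\<Sum>i\<in>A. g i w)" for g :: "'a \<Rightarrow> tensor" and w
    by (induction A rule: infinite_finite_induct) auto
  then show ?thesis by (simp add: fun_eq_iff trunc_def coef_sum)
qed

lemma tone_eq_trunc: "tone = trunc k 1"
  by (simp add: tone_def trunc_def fun_eq_iff)

lemma tgen_eq_trunc: "tgen k i = trunc k (letter i)"
  by (auto simp: tgen_def trunc_def letter_def fun_eq_iff)

lemma tmul_eq_trunc: "tmul k a b = trunc k (TS a * TS b)"
  by (simp add: tmul_def trunc_def coef_mult fun_eq_iff)

lemma tmul_trunc: "tmul k (trunc k x) (trunc k y) = trunc k (x * y)"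
  unfolding tmul_eq_trunc trunc_eq_iff by (intro eq_upto_mult eq_upto_TS_trunc)

lemma tbracket_trunc: "tbracket k (trunc k x) (trunc k y) = trunc k (x * y - y * x)"
  by (simp add: tbracket_def tmul_trunc trunc_diff)

lemma tpow_trunc: "tpow k (trunc k x) n = trunc k (x ^ n)"
  by (induction n) (simp_all add: tone_eq_trunc tmul_trunc power_commutes)

lemma texp_trunc:
  assumes "coef z [] = 0"
  shows "texp k (trunc k z) = trunc k (Exp z)"
proof -
  have z: "vanishes_below 1 z" using assms by (simp add: vanishes_below_def)
  have "texp k (trunc k z) = trunc k (\<Sum>l\<le>k. (1 / fact l) *\<^sub>R z ^ l)"
    by (simp add: texp_def trunc_sum trunc_scaleR tpow_trunc)
  also have "\<dots> = trunc k (Exp z)"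
    unfolding trunc_eq_iff by (auto simp: eq_upto_def coef_sum coef_Exp_upto[OF z])
  finally show ?thesis .
qed

lemma tlog_trunc:
  assumes "coef x [] = 1"
  shows "tlog k (trunc k x) = trunc k (Log x)"
proof -
  have x: "vanishes_below 1 (x - 1)" using assms by (simp add: vanishes_below_def)
  have "trunc k x - tone = trunc k (x - 1)" by (simp add: tone_eq_trunc trunc_diff)
  then have "tlog k (trunc k x) = trunc k (\<Sum>l\<in>{1..k}. ((-1) ^ (l + 1) / real l) *\<^sub>R (x - 1) ^ l)"
    by (simp only: tlog_def tpow_trunc trunc_sum trunc_scaleR)
  also have "\<dots> = trunc k (Log x)"
    unfolding trunc_eq_iff eq_upto_def
  proof (intro allI impI)
    fix w :: "nat list" assume w: "length w \<le> k"
    have "coef (Log x) w = (\<Sum>n\<le>k. fps_ln 1 $ n * coef ((x - 1) ^ n) w)"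
      unfolding Log_def by (rule coef_fps_eval_upto[OF x w])
    also have "\<dots> = (\<Sum>n\<in>{1..k}. fps_ln 1 $ n * coef ((x - 1) ^ n) w)"
      by (rule sum.mono_neutral_right) (auto simp: Suc_le_eq)
    also have "\<dots> = (\<Sum>n\<in>{1..k}. (-1) ^ (n + 1) / real n * coef ((x - 1) ^ n) w)"
    proof (rule sum.cong[OF refl])
      fix n assume "n \<in> {1..k}"
      then obtain j where "n = Suc j" by (cases n) auto
      then show "fps_ln 1 $ n * coef ((x - 1) ^ n) w =
          (-1) ^ (n + 1) / real n * coef ((x - 1) ^ n) w"
        by (simp add: fps_ln_nth)
    qed
    finally show "coef (\<Sum>l\<in>{1..k}. ((-1) ^ (l + 1) / real l) *\<^sub>R (x - 1) ^ l) w = coef (Log x) w"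
      by (simp add: coef_sum)
  qed
  finally show ?thesis .
qed

lemma tmul_assoc: "tmul k (tmul k a b) c = tmul k a (tmul k b c)"
proof -
  have "tmul k (tmul k a b) c = trunc k (TS a * TS b * TS c)"
    unfolding tmul_eq_trunc[of k a b] tmul_eq_trunc[of k _ c] trunc_eq_iff
    by (intro eq_upto_mult eq_upto_TS_trunc eq_upto_refl)
  also have "\<dots> = tmul k a (tmul k b c)"
    unfolding tmul_eq_trunc[of k b c] tmul_eq_trunc[of k a] trunc_eq_iff mult.assoc
    by (intro eq_upto_mult eq_upto_TS_trunc eq_upto_refl eq_upto_sym)
  finally show ?thesis .
qed

lemma tinv_eqI:
  assumes y: "y \<in> Tset d k" and xy: "tmul k x y = tone" and yx: "tmul k y x = tone"
  shows "tinv d k x = y"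
  unfolding tinv_def
proof (rule the_equality)
  show "y \<in> Tset d k \<and> tmul k x y = tone \<and> tmul k y x = tone" using assms by simp
  fix y' assume y': "y' \<in> Tset d k \<and> tmul k x y' = tone \<and> tmul k y' x = tone"
  have tone_tmul: "tmul k tone z = z" "tmul k z tone = z" if "z \<in> Tset d k" for z
    using that by (simp_all add: tmul_eq_trunc tone_def one_tseries_def[symmetric] trunc_TS)
  have "y' = tmul k y' (tmul k x y)" using y' xy tone_tmul(2)[of y'] by simp
  also have "\<dots> = tmul k (tmul k y' x) y" by (simp add: tmul_assoc)
  also have "\<dots> = y" using y' y by (simp add: tone_tmul(1))
  finally show "y' = y" .
qed

lemma tinv_trunc:
  assumes "coef x [] = 1" "in_alphabet d x"
  shows "tinv d k (trunc k x) = trunc k (Inv x)"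
  using assms
  by (intro tinv_eqI trunc_in_Tset in_alphabet_Inv)
    (simp_all add: tmul_trunc Inv_mult tone_eq_trunc[symmetric])

lemma primitive_TS_trunc:
  assumes "primitive x"
  shows "primitive (TS (trunc k x))"
  unfolding primitive_def
proof (intro conjI allI impI)
  show "coef (TS (trunc k x)) [] = 0" using assms by (simp add: primitive_def trunc_def)
  fix u v :: "nat list" assume uv: "u \<noteq> []" "v \<noteq> []"
  have "shuffle_coeff (coef (TS (trunc k x))) u v =
      shuffle_coeff (\<lambda>w. if length u + length v \<le> k then coef x w else 0) u v"
    by (rule shuffle_coeff_cong) (simp add: trunc_def)
  also have "\<dots> = 0"
    using assms uv
    by (cases "length u + length v \<le> k") (simp_all add: primitive_def shuffle_coeff_zero)
  finally show "shuffle_coeff (coef (TS (trunc k x))) u v = 0" .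
qed

lemma primitive_letter: "primitive (letter i)"
  unfolding primitive_def
proof (intro conjI allI impI)
  show "coef (letter i) [] = 0" by (simp add: letter_def)
  fix u v :: "nat list" assume uv: "u \<noteq> []" "v \<noteq> []"
  have "shuffle_coeff (coef (letter i)) u v = shuffle_coeff (\<lambda>w. 0) u v"
    by (rule shuffle_coeff_cong) (use uv in \<open>auto simp: letter_def neq_Nil_conv\<close>)
  then show "shuffle_coeff (coef (letter i)) u v = 0" by (simp add: shuffle_coeff_zero)
qed

lemma liealg_Tset_primitive: "a \<in> liealg d k \<Longrightarrow> a \<in> Tset d k \<and> primitive (TS a)"
proof (induction rule: liealg.induct)
  case (gen i)
  then show ?case
    by (simp add: tgen_eq_trunc trunc_in_Tset in_alphabet_letter primitive_TS_trunc
        primitive_letter)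
next
  case zero
  have "TS (\<lambda>w. 0) = 0" by (rule tseries_eqI) simp
  then show ?case by (simp add: primitive_zero Tset_def)
next
  case (add a b)
  then have "a + b = trunc k (TS a + TS b)" by (auto simp: trunc_add trunc_TS)
  moreover have "in_alphabet d (TS a + TS b)" "primitive (TS a + TS b)"
    using add by (auto intro: in_alphabet_add Tset_in_alphabet primitive_add)
  ultimately show ?case by (simp add: trunc_in_Tset primitive_TS_trunc)
next
  case (smul a c)
  then have "tsmul c a = trunc k (c *\<^sub>R TS a)" by (auto simp: trunc_scaleR trunc_TS)
  moreover have "in_alphabet d (c *\<^sub>R TS a)" "primitive (c *\<^sub>R TS a)"
    using smul by (auto intro: in_alphabet_scaleR Tset_in_alphabet primitive_scaleR)
  ultimately show ?case by (simp add: trunc_in_Tset primitive_TS_trunc)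
next
  case (bracket a b)
  then have "tbracket k a b = trunc k (TS a * TS b - TS b * TS a)"
    using tbracket_trunc[of k "TS a" "TS b"] by (auto simp: trunc_TS)
  moreover have "in_alphabet d (TS a * TS b - TS b * TS a)"
    using bracket by (intro in_alphabet_diff in_alphabet_mult Tset_in_alphabet) auto
  moreover have "primitive (TS a * TS b - TS b * TS a)"
    using bracket by (intro primitive_commutator) auto
  ultimately show ?case by (simp add: trunc_in_Tset primitive_TS_trunc)
qed

lemma liealg_sum:
  "finite A \<Longrightarrow> (\<And>i. i \<in> A \<Longrightarrow> f i \<in> liealg d k) \<Longrightarrow> (\<Sum>i\<in>A. f i) \<in> liealg d k"
  by (induction A rule: finite_induct) (auto intro: liealg.zero liealg.add)

lemma trunc_rbracket_in_liealg: "set w \<subseteq> {..<d} \<Longrightarrow> trunc k (rbracket w) \<in> liealg d k"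
proof (induction w)
  case Nil then show ?case by (simp only: rbracket.simps trunc_zero liealg.zero)
next
  case (Cons a u)
  show ?case
  proof (cases "u = []")
    case True
    then show ?thesis using Cons by (simp add: tgen_eq_trunc[symmetric] liealg.gen)
  next
    case False
    then have "trunc k (rbracket (a # u)) = tbracket k (trunc k (rbracket u)) (tgen k a)"
      by (simp add: tgen_eq_trunc tbracket_trunc)
    then show ?thesis using Cons by (simp add: liealg.bracket liealg.gen)
  qed
qed

lemma primitive_eq_sum_rbracket:
  assumes W: "finite W" "\<And>w. coef z w \<noteq> 0 \<Longrightarrow> w \<in> W" and z: "primitive z"
  shows "z = (\<Sum>w\<in>W. (coef z w / real (length w)) *\<^sub>R rbracket (rev w))"
proof (rule tseries_eqI)
  fix x
  have "coef z w / real (length w) * bracket_coef x w =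
      coef z w * bracket_coef x w / real (length x)" for w
    by (cases "length w = length x") (simp_all add: bracket_coef_eq_0)
  then have "(\<Sum>w\<in>W. coef z w / real (length w) * bracket_coef x w) =
      (\<Sum>w\<in>W. coef z w * bracket_coef x w) / real (length x)"
    unfolding sum_divide_distrib by (intro sum.cong) simp_all
  also have "\<dots> = coef z x"
    using primitive_sum_bracket_coef[OF W z, of x] z
    by (cases "x = []") (simp_all add: primitive_def)
  finally show "coef z x = coef (\<Sum>w\<in>W. (coef z w / real (length w)) *\<^sub>R rbracket (rev w)) x"
    by (simp add: coef_sum coef_rbracket)
qed

lemma primitive_in_liealg:
  assumes z: "z \<in> Tset d k" and p: "primitive (TS z)"
  shows "z \<in> liealg d k"
proof -
  define W where "W = {w. set w \<subseteq> {..<d} \<and> length w \<le> k}"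
  have W: "finite W" "\<And>w. coef (TS z) w \<noteq> 0 \<Longrightarrow> w \<in> W"
    using z by (auto simp: W_def Tset_def intro: finite_lists_length_le)
  have "z = trunc k (\<Sum>w\<in>W. (z w / real (length w)) *\<^sub>R rbracket (rev w))"
    using primitive_eq_sum_rbracket[OF W p] trunc_TS[OF z] by simp
  also have "\<dots> \<in> liealg d k"
    unfolding trunc_sum trunc_scaleR
    by (intro liealg_sum W liealg.smul trunc_rbracket_in_liealg) (auto simp: W_def)
  finally show ?thesis .
qed

lemma GsetE:
  assumes "x \<in> Gset d k"
  obtains X where "group_like X" "in_alphabet d X" "x = trunc k X"
proof -
  obtain a where a: "a \<in> liealg d k" "x = texp k a" using assms by (auto simp: Gset_def)
  have "a \<in> Tset d k" "primitive (TS a)" using liealg_Tset_primitive[OF a(1)] by auto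
  then have "group_like (Exp (TS a))" "in_alphabet d (Exp (TS a))"
    "x = trunc k (Exp (TS a))"
    using a(2) by (auto intro: group_like_Exp in_alphabet_Exp Tset_in_alphabet
        simp: texp_trunc[symmetric] trunc_TS primitive_def)
  then show ?thesis by (rule that)
qed

lemma trunc_in_Gset:
  assumes x: "group_like x" "in_alphabet d x"
  shows "trunc k x \<in> Gset d k"
proof -
  have "trunc k (Log x) \<in> liealg d k"
    using x
    by (intro primitive_in_liealg trunc_in_Tset in_alphabet_Log primitive_TS_trunc primitive_Log)
  moreover have "texp k (trunc k (Log x)) = trunc k x"
    by (simp add: texp_trunc Exp_Log[OF group_like_coef_Nil[OF x(1)]])
  ultimately show ?thesis unfolding Gset_def by (metis image_eqI)
qed

lemma barycentre_equation_trunc_iff: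
  assumes Y: "group_like Y" "in_alphabet d Y" and X: "group_like X1" "group_like X2"
  shows "sum_list (map (\<lambda>x. tlog k (tmul k (tinv d k (trunc k Y)) x)) [trunc k X1, trunc k X2]) = 0
    \<longleftrightarrow> trunc k Y = trunc k (X1 * Exp ((1/2) *\<^sub>R Log (Inv X1 * X2)))"
proof -
  have "sum_list (map (\<lambda>x. tlog k (tmul k (tinv d k (trunc k Y)) x)) [trunc k X1, trunc k X2]) =
      trunc k (Log (Inv Y * X1) + Log (Inv Y * X2))"
    using Y X
    by (simp add: tinv_trunc tmul_trunc tlog_trunc group_like_coef_Nil trunc_add trunc_zero)
  then show ?thesis
    using two_point_barycentre_iff[of Y X1 X2 k] Y X
    by (simp add: group_like_coef_Nil trunc_eq_0_iff trunc_eq_iff eq_upto_sym_iff)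
qed

theorem proposition4p4:
  fixes d k :: nat and x1 x2 :: tensor
  assumes "x1 \<in> Gset d k" and "x2 \<in> Gset d k"
  shows "bary d k [x1, x2] =
    tmul k x1 (texp k (tsmul (1/2) (tlog k (tmul k (tinv d k x1) x2))))"
proof -
  obtain X1 where X1: "group_like X1" "in_alphabet d X1" and x1: "x1 = trunc k X1"
    using assms(1) by (rule GsetE)
  obtain X2 where X2: "group_like X2" "in_alphabet d X2" and x2: "x2 = trunc k X2"
    using assms(2) by (rule GsetE)
  define M where "M = X1 * Exp ((1/2) *\<^sub>R Log (Inv X1 * X2))"
  have M: "group_like M" "in_alphabet d M"
    unfolding M_def using X1 X2
    by (auto intro!: group_like_mult group_like_Exp primitive_scaleR primitive_Log group_like_Inv
        in_alphabet_mult in_alphabet_Exp in_alphabet_scaleR in_alphabet_Log in_alphabet_Inv)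
  have "bary d k [x1, x2] = trunc k M"
    unfolding bary_def
  proof (rule the_equality)
    show "trunc k M \<in> Gset d k \<and>
        sum_list (map (\<lambda>x. tlog k (tmul k (tinv d k (trunc k M)) x)) [x1, x2]) = 0"
      using trunc_in_Gset[OF M] barycentre_equation_trunc_iff[OF M X1(1) X2(1)]
      by (simp add: x1 x2 M_def)
    fix m
    assume m: "m \<in> Gset d k \<and> sum_list (map (\<lambda>x. tlog k (tmul k (tinv d k m) x)) [x1, x2]) = 0"
    then obtain Y where "group_like Y" "in_alphabet d Y" "m = trunc k Y" by (auto elim: GsetE)
    then show "m = trunc k M"
      using m barycentre_equation_trunc_iff[of Y d X1 X2 k] X1 X2 by (simp add: x1 x2 M_def)
  qed
  moreover have "tmul k x1 (texp k (tsmul (1/2) (tlog k (tmul k (tinv d k x1) x2)))) = trunc k M"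
    using X1 X2
    by (simp add: x1 x2 M_def tinv_trunc tmul_trunc tlog_trunc group_like_coef_Nil
        trunc_scaleR[symmetric] texp_trunc)
  ultimately show ?thesis by simp
qed

end
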